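(* Let $R\ge0$, let $X$ be an $R$-rough geodesic metric space, let $\alpha\colon S\to X$ be an $R$-circle, and consider a tightening sequence for $\alpha$ (with Riemannian circles $S_i$, $R$-circles $\alpha_i\colon S_i\to X$, tightened segments $Q_i$ and maps $\pi^{(i)}\colon S\to S_i$). Suppose the tightening sequence is completely disjoint and $\sum_{i=0}^\infty|Q_i|<|S|$. Let $S_\infty$ be the metric quotient of $(S,\delta)$, where $\delta(x,y)=\lim_i d_{S_i}(\pi^{(i)}(x),\pi^{(i)}(y))$, and let $\sigma\colon S_\infty\to S$ be a section of the quotient map $S\to S_\infty$. Then for every $x\in S_\infty$ the limit $\alpha_\infty(x)=\lim_{i\to\infty}\alpha_i(\pi^{(i)}(\sigma(x)))$ exists, and $\alpha_\infty\colon S_\infty\to X$ is an $R$-circle.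
   Context: $X$ is $R$-rough geodesic if any $x_1,x_2$ are joined by $f\colon[0,\ell]\to X$, $\ell=d(x_1,x_2)$, $f(0)=x_1,f(\ell)=x_2$, with $|d(f(s),f(t))-|s-t||\le R$. An $R$-circle is a map $\beta\colon T\to X$ from a Riemannian circle $T$ (length $|T|$) with $d(\beta(p),\beta(q))\le d_T(p,q)+R$. Tightening sequence for a Riemannian circle $S$: Riemannian circles $S_0=S,S_1,\dots$, spaces $P_i$ (compact intervals or Riemannian circles), maps $\iota_i\colon P_i\hookrightarrow S_i$, $\varphi_i\colon P_i\to S_{i+1}$ with, for each $i$, either (a) $\iota_i,\varphi_i$ continuous unit-speed paths, $\varphi_i$ injective on the interior $\mathring P_i$, $|P_i|\ge|S|/2$, $|S_{i+1}|<|S_i|$; or (b) $P_i=S_i=S_{i+1}$, $\iota_i,\varphi_i$ identities. In case (a) $Q_i=S_i\setminus\iota_i(\mathring P_i)$, $\bar Q_i=S_{i+1}\setminus\varphi_i(\mathring P_i)$ (closed segments, $|\bar Q_i|<|Q_i|$); in case (b) $Q_i=\bar Q_i=\emptyset$. $\pi_i\colon S_i\to S_{i+1}$ equals $\varphi_i\circ\iota_i^{-1}$ on $\iota_i(P_i)$ and is affine from $Q_i$ onto $\bar Q_i$; $\pi^{(i)}=\pi_{i-1}\circ\cdots\circ\pi_0$. With $\mathring P_{0,0}=S$, $\mathring P_{0,j+1}=\mathring P_{0,j}\cap\iota_j(\mathring P_j)$ (in $S_j$), the sequence is completely disjoint if $Q_i\subset\mathring P_{0,i}$ in $S_i$ for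 all $i$. A tightening sequence for the $R$-circle $\alpha$ is a tightening sequence for $S$ with $R$-circles $\alpha_i\colon S_i\to X$, $\alpha_0=\alpha$, and $\alpha_i\circ\iota_i=\alpha_{i+1}\circ\varphi_i$ for all $i$. *)

theory Defs
  imports "HOL-Analysis.Analysis"
begin

text \<open>A Riemannian circle of length L > 0 is modelled by the point set {0..<L}
  (reals modulo L) with the intrinsic (arc length) metric circ_dist L.\<close>
definition circ_dist :: "real \<Rightarrow> real \<Rightarrow> real \<Rightarrow> real" where
  "circ_dist L x y = L * min (frac (\<bar>x - y\<bar> / L)) (1 - frac (\<bar>x - y\<bar> / L))"

definition circ_pts :: "real \<Rightarrow> real set" where
  "circ_pts L = {0..<L}"

definition rough_geodesic :: "real \<Rightarrow> 'a::metric_space set \<Rightarrow> bool" where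
  "rough_geodesic R X \<longleftrightarrow>
     (\<forall>x1\<in>X. \<forall>x2\<in>X. \<exists>f::real \<Rightarrow> 'a.
        (\<forall>s\<in>{0..dist x1 x2}. f s \<in> X) \<and> f 0 = x1 \<and> f (dist x1 x2) = x2 \<and>
        (\<forall>s\<in>{0..dist x1 x2}. \<forall>t\<in>{0..dist x1 x2}.
            \<bar>dist (f s) (f t) - \<bar>s - t\<bar>\<bar> \<le> R))"

definition rcircle :: "real \<Rightarrow> real \<Rightarrow> (real \<Rightarrow> 'a::metric_space) \<Rightarrow> bool" where
  "rcircle R L \<beta> \<longleftrightarrow> 0 < L \<and>
     (\<forall>p\<in>circ_pts L. \<forall>q\<in>circ_pts L. dist (\<beta> p) (\<beta> q) \<le> circ_dist L p q + R)"

text \<open>The spaces P_i: a compact interval [0,l] (c = False) or a Riemannian circle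
  of length l (c = True); their point sets, interiors and metrics.\<close>
definition pdom :: "bool \<Rightarrow> real \<Rightarrow> real set" where
  "pdom c l = (if c then {0..<l} else {0..l})"

definition pint :: "bool \<Rightarrow> real \<Rightarrow> real set" where
  "pint c l = (if c then {0..<l} else {0<..<l})"

definition pdist :: "bool \<Rightarrow> real \<Rightarrow> real \<Rightarrow> real \<Rightarrow> real" where
  "pdist c l s t = (if c then circ_dist l s t else \<bar>s - t\<bar>)"

definition unit_speed_path :: "bool \<Rightarrow> real \<Rightarrow> real \<Rightarrow> (real \<Rightarrow> real) \<Rightarrow> bool" where
  "unit_speed_path c l L f \<longleftrightarrow> f ` pdom c l \<subseteq> circ_pts L \<and>
     (\<forall>t\<in>pdom c l. \<exists>e>0. \<forall>s\<in>pdom c l. pdist c l s t < e \<longrightarrow>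
         circ_dist L (f s) (f t) = pdist c l s t)"

text \<open>Q_i and \<bar>Q_i (empty in case (b)).\<close>
definition Qset :: "bool \<Rightarrow> real \<Rightarrow> bool \<Rightarrow> real \<Rightarrow> (real \<Rightarrow> real) \<Rightarrow> real set" where
  "Qset a L c l f = (if a then circ_pts L - f ` pint c l else {})"

fun picomp :: "(nat \<Rightarrow> real \<Rightarrow> real) \<Rightarrow> nat \<Rightarrow> real \<Rightarrow> real" where
  "picomp \<pi> 0 = (\<lambda>x. x)"
| "picomp \<pi> (Suc i) = (\<lambda>x. \<pi> i (picomp \<pi> i x))"

text \<open>The sets \<open>P_{0,j}\<close> (interiors), regarded as subsets of S_j.\<close>
fun P0 :: "(nat \<Rightarrow> real) \<Rightarrow> (nat \<Rightarrow> bool) \<Rightarrow> (nat \<Rightarrow> real) \<Rightarrow> (nat \<Rightarrow> real \<Rightarrow> real)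
             \<Rightarrow> (nat \<Rightarrow> real \<Rightarrow> real) \<Rightarrow> nat \<Rightarrow> real set" where
  "P0 L pc l \<iota> \<pi> 0 = circ_pts (L 0)"
| "P0 L pc l \<iota> \<pi> (Suc j) = \<pi> j ` (P0 L pc l \<iota> \<pi> j \<inter> \<iota> j ` pint (pc j) (l j))"

text \<open>Tightening sequence for the Riemannian circle S = S_0 of length L 0.
  caseA i: step i is of type (a) (otherwise type (b)).
  pc i, l i: P_i is a circle (pc i) or interval, of length l i.
  \<iota>, \<phi>: the maps; \<pi> i: the map pi_i : S_i \<rightarrow> S_{i+1}.\<close>
definition tightening_seq ::
  "(nat \<Rightarrow> real) \<Rightarrow> (nat \<Rightarrow> bool) \<Rightarrow> (nat \<Rightarrow> bool) \<Rightarrow> (nat \<Rightarrow> real) \<Rightarrow>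
   (nat \<Rightarrow> real \<Rightarrow> real) \<Rightarrow> (nat \<Rightarrow> real \<Rightarrow> real) \<Rightarrow> (nat \<Rightarrow> real \<Rightarrow> real) \<Rightarrow> bool" where
  "tightening_seq L caseA pc l \<iota> \<phi> \<pi> \<longleftrightarrow>
    (\<forall>i. 0 < L i \<and>
      (caseA i \<longrightarrow>
          unit_speed_path (pc i) (l i) (L i) (\<iota> i) \<and>
          unit_speed_path (pc i) (l i) (L (Suc i)) (\<phi> i) \<and>
          inj_on (\<iota> i) (pint (pc i) (l i)) \<and>
          inj_on (\<phi> i) (pint (pc i) (l i)) \<and>
          L 0 / 2 \<le> l i \<and> L (Suc i) < L i) \<and>
      (\<not> caseA i \<longrightarrow>
          pc i \<and> l i = L i \<and> L (Suc i) = L i \<and>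
          (\<forall>t\<in>circ_pts (L i). \<iota> i t = t \<and> \<phi> i t = t)) \<and>
      \<pi> i ` circ_pts (L i) \<subseteq> circ_pts (L (Suc i)) \<and>
      (\<forall>t\<in>pdom (pc i) (l i). \<pi> i (\<iota> i t) = \<phi> i t) \<and>
      (caseA i \<longrightarrow>
          (let Q = Qset True (L i) (pc i) (l i) (\<iota> i);
               Qb = Qset True (L (Suc i)) (pc i) (l i) (\<phi> i) in
           \<pi> i ` Q = Qb \<and>
           (\<forall>x\<in>Q. \<forall>y\<in>Q. circ_dist (L (Suc i)) (\<pi> i x) (\<pi> i y)
                 = measure lborel Qb / measure lborel Q * circ_dist (L i) x y))))"

definition completely_disjoint ::
  "(nat \<Rightarrow> real) \<Rightarrow> (nat \<Rightarrow> bool) \<Rightarrow> (nat \<Rightarrow> bool) \<Rightarrow> (nat \<Rightarrow> real) \<Rightarrow>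
   (nat \<Rightarrow> real \<Rightarrow> real) \<Rightarrow> (nat \<Rightarrow> real \<Rightarrow> real) \<Rightarrow> bool" where
  "completely_disjoint L caseA pc l \<iota> \<pi> \<longleftrightarrow>
    (\<forall>i. Qset (caseA i) (L i) (pc i) (l i) (\<iota> i) \<subseteq> P0 L pc l \<iota> \<pi> i)"

definition tightening_seq_for ::
  "real \<Rightarrow> (real \<Rightarrow> 'a::metric_space) \<Rightarrow> (nat \<Rightarrow> real) \<Rightarrow> (nat \<Rightarrow> bool) \<Rightarrow> (nat \<Rightarrow> bool) \<Rightarrow>
   (nat \<Rightarrow> real) \<Rightarrow> (nat \<Rightarrow> real \<Rightarrow> real) \<Rightarrow> (nat \<Rightarrow> real \<Rightarrow> real) \<Rightarrow> (nat \<Rightarrow> real \<Rightarrow> real) \<Rightarrow>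
   (nat \<Rightarrow> real \<Rightarrow> 'a) \<Rightarrow> bool" where
  "tightening_seq_for R \<alpha> L caseA pc l \<iota> \<phi> \<pi> \<alpha>s \<longleftrightarrow>
    tightening_seq L caseA pc l \<iota> \<phi> \<pi> \<and>
    (\<forall>x\<in>circ_pts (L 0). \<alpha>s 0 x = \<alpha> x) \<and>
    (\<forall>i. rcircle R (L i) (\<alpha>s i) \<and>
         (\<forall>t\<in>pdom (pc i) (l i). \<alpha>s i (\<iota> i t) = \<alpha>s (Suc i) (\<phi> i t)))"

definition Qlen :: "(nat \<Rightarrow> real) \<Rightarrow> (nat \<Rightarrow> bool) \<Rightarrow> (nat \<Rightarrow> bool) \<Rightarrow> (nat \<Rightarrow> real) \<Rightarrow>
   (nat \<Rightarrow> real \<Rightarrow> real) \<Rightarrow> nat \<Rightarrow> real" where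
  "Qlen L caseA pc l \<iota> i = measure lborel (Qset (caseA i) (L i) (pc i) (l i) (\<iota> i))"

definition tdelta :: "(nat \<Rightarrow> real) \<Rightarrow> (nat \<Rightarrow> real \<Rightarrow> real) \<Rightarrow> real \<Rightarrow> real \<Rightarrow> real" where
  "tdelta L \<pi> x y = lim (\<lambda>i. circ_dist (L i) (picomp \<pi> i x) (picomp \<pi> i y))"

definition Sinf :: "(nat \<Rightarrow> real) \<Rightarrow> (nat \<Rightarrow> real \<Rightarrow> real) \<Rightarrow> real set set" where
  "Sinf L \<pi> = (\<lambda>x. {y\<in>circ_pts (L 0). tdelta L \<pi> x y = 0}) ` circ_pts (L 0)"

end

theory Submission
  imports Defs "HOL-Library.Real_Mod"

begin

section \<open>Arc-length distance on a circle\<close>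

lemma frac_min_le: "min (frac (w::real)) (1 - frac w) \<le> \<bar>w - of_int n\<bar>"
proof (cases "n \<le> \<lfloor>w\<rfloor>")
  case True
  then have "frac w \<le> w - of_int n"
    unfolding frac_def by (simp add: le_floor_iff)
  then show ?thesis by linarith
next
  case False
  then have "of_int \<lfloor>w\<rfloor> + 1 \<le> (of_int n :: real)"
    by simp
  then have "1 - frac w \<le> of_int n - w"
    unfolding frac_def by linarith
  then show ?thesis by linarith
qed

lemma frac_min_attained: "\<exists>n. min (frac (w::real)) (1 - frac w) = \<bar>w - of_int n\<bar>"
proof (cases "frac w \<le> 1 - frac w")
  case True
  then have "min (frac w) (1 - frac w) = \<bar>w - of_int \<lfloor>w\<rfloor>\<bar>"
    unfolding frac_def by simp
  then show ?thesis by blast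
next
  case False
  then have "min (frac w) (1 - frac w) = \<bar>w - of_int (\<lfloor>w\<rfloor> + 1)\<bar>"
    using frac_lt_1[of w] unfolding frac_def by simp
  then show ?thesis by blast
qed

lemma circ_dist_le_shift:
  assumes "0 < L" shows "circ_dist L x y \<le> \<bar>x - y + of_int k * L\<bar>"
proof -
  define n where "n = (if y \<le> x then - k else k)"
  have "\<bar>\<bar>x - y\<bar> / L - of_int n\<bar> = \<bar>x - y + of_int k * L\<bar> / L"
    using assms unfolding n_def by (auto simp: field_simps abs_if)
  then show ?thesis
    using frac_min_le[of "\<bar>x - y\<bar> / L" n] assms
    unfolding circ_dist_def by (simp add: field_simps)
qed

lemma circ_dist_attained:
  assumes "0 < L" shows "\<exists>k. circ_dist L x y = \<bar>x - y + of_int k * L\<bar>"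
proof -
  obtain n where n: "min (frac (\<bar>x - y\<bar> / L)) (1 - frac (\<bar>x - y\<bar> / L)) = \<bar>\<bar>x - y\<bar> / L - of_int n\<bar>"
    using frac_min_attained by blast
  define k where "k = (if y \<le> x then - n else n)"
  have "\<bar>\<bar>x - y\<bar> / L - of_int n\<bar> = \<bar>x - y + of_int k * L\<bar> / L"
    using assms unfolding k_def by (auto simp: field_simps abs_if)
  then have "circ_dist L x y = \<bar>x - y + of_int k * L\<bar>"
    using assms unfolding circ_dist_def n by simp
  then show ?thesis by blast
qed

lemma circ_dist_commute: "circ_dist L x y = circ_dist L y x"
  unfolding circ_dist_def by (simp add: abs_minus_commute)

lemma circ_dist_nonneg: "0 < L \<Longrightarrow> 0 \<le> circ_dist L x y"
  by (metis abs_ge_zero circ_dist_attained)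

lemma circ_dist_le_abs: "0 < L \<Longrightarrow> circ_dist L x y \<le> \<bar>x - y\<bar>"
  using circ_dist_le_shift[of L x y 0] by simp

lemma circ_dist_eq_abs:
  assumes L: "0 < L" and xy: "\<bar>x - y\<bar> \<le> L / 2"
  shows "circ_dist L x y = \<bar>x - y\<bar>"
proof -
  obtain k where k: "circ_dist L x y = \<bar>x - y + of_int k * L\<bar>"
    using circ_dist_attained[OF L] by blast
  have "\<bar>x - y\<bar> \<le> \<bar>x - y + of_int k * L\<bar>"
  proof (cases "k = 0")
    case False
    then have "L \<le> \<bar>of_int k * L\<bar>"
      using L by (simp add: abs_mult mult_le_cancel_right1 del: of_int_abs)
    then show ?thesis using xy by linarith
  qed simp
  then show ?thesis using k circ_dist_le_abs[OF L, of x y] by linarith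
qed

lemma circ_dist_triangle:
  assumes L: "0 < L" shows "circ_dist L x z \<le> circ_dist L x y + circ_dist L y z"
proof -
  obtain k m where "circ_dist L x y = \<bar>x - y + of_int k * L\<bar>" "circ_dist L y z = \<bar>y - z + of_int m * L\<bar>"
    using circ_dist_attained[OF L] by metis
  moreover have "x - z + of_int (k + m) * L = (x - y + of_int k * L) + (y - z + of_int m * L)"
    by (simp add: algebra_simps)
  then have "circ_dist L x z \<le> \<bar>(x - y + of_int k * L) + (y - z + of_int m * L)\<bar>"
    using circ_dist_le_shift[OF L, of x z "k + m"] by simp
  ultimately show ?thesis by linarith
qed

lemma circ_dist_rcong_le:
  assumes L: "0 < L" and "[x = x'] (rmod L)" "[y = y'] (rmod L)"
  shows "circ_dist L x' y' \<le> circ_dist L x y"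
proof -
  obtain n m where "x' = x + of_int n * L" "y' = y + of_int m * L"
    using assms(2,3) unfolding rcong_altdef by blast
  moreover obtain k where "circ_dist L x y = \<bar>x - y + of_int k * L\<bar>"
    using circ_dist_attained[OF L] by blast
  moreover have "x' - y' + of_int (k - n + m) * L = x - y + of_int k * L"
    if "x' = x + of_int n * L" "y' = y + of_int m * L"
    using that by (simp add: algebra_simps)
  ultimately show ?thesis
    using circ_dist_le_shift[OF L, of x' y' "k - n + m"] by simp
qed

lemma circ_dist_rcong:
  "0 < L \<Longrightarrow> [x = x'] (rmod L) \<Longrightarrow> [y = y'] (rmod L) \<Longrightarrow> circ_dist L x y = circ_dist L x' y'"
  by (meson antisym circ_dist_rcong_le rcong_sym)

lemma circ_dist_rmod: "0 < L \<Longrightarrow> circ_dist L (x rmod L) (y rmod L) = circ_dist L x y"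
  by (rule circ_dist_rcong) simp_all

lemma circ_dist_eq_0_iff:
  assumes L: "0 < L" shows "circ_dist L x y = 0 \<longleftrightarrow> [x = y] (rmod L)"
proof
  assume "circ_dist L x y = 0"
  moreover obtain k where "circ_dist L x y = \<bar>x - y + of_int k * L\<bar>"
    using circ_dist_attained[OF L] by blast
  ultimately have "x = y + of_int (- k) * L" by simp
  then have "[y = x] (rmod L)" unfolding rcong_altdef by blast
  then show "[x = y] (rmod L)" by (rule rcong_sym)
next
  assume "[x = y] (rmod L)"
  then have "circ_dist L x y = circ_dist L y y" using circ_dist_rcong[OF L] by blast
  then show "circ_dist L x y = 0" unfolding circ_dist_def by simp
qed

lemma circ_dist_eqD:
  assumes L: "0 < L" and "circ_dist L x y = d"
  shows "[x = y + d] (rmod L) \<or> [x = y - d] (rmod L)"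
proof -
  obtain k where "d = \<bar>x - y + of_int k * L\<bar>"
    using circ_dist_attained[OF L] assms(2) by blast
  then have "y + d = x + of_int k * L \<or> y - d = x + of_int k * L" by linarith
  then show ?thesis unfolding rcong_altdef by blast
qed

lemma circ_dist_affine: "\<epsilon> \<in> {-1, 1} \<Longrightarrow> circ_dist L (a + \<epsilon> * x) (a + \<epsilon> * y) = circ_dist L x y"
  unfolding circ_dist_def by (auto simp: abs_minus_commute)

lemma circ_dist_eq_diff:
  assumes "0 < L" "L / 2 \<le> x" "x \<le> L" shows "circ_dist L x 0 = L - x"
proof -
  have "[x = x - L] (rmod L)"
    unfolding rcong_altdef by (rule exI[of _ "-1"]) simp
  then have "circ_dist L x 0 = circ_dist L (x - L) 0"
    using circ_dist_rcong[OF assms(1)] by blast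
  also have "\<dots> = L - x"
    using circ_dist_eq_abs[OF assms(1), of "x - L" 0] assms by simp
  finally show ?thesis .
qed

lemma circ_dist_scale: "0 < L \<Longrightarrow> circ_dist L x y = L * circ_dist 1 ((x - y) / L) 0"
  unfolding circ_dist_def by (simp add: abs_div)

lemma circ_dist_tendsto:
  assumes "Ls \<longlonglongrightarrow> L" "0 < L" "\<And>i. 0 < Ls i" "a \<longlonglongrightarrow> A" "b \<longlonglongrightarrow> B"
  shows "(\<lambda>i. circ_dist (Ls i) (a i) (b i)) \<longlonglongrightarrow> circ_dist L A B"
proof -
  have "1-lipschitz_on UNIV (\<lambda>w. circ_dist 1 w 0)"
  proof (rule lipschitz_onI)
    fix v w :: real
    have "circ_dist 1 v 0 \<le> circ_dist 1 v w + circ_dist 1 w 0" "circ_dist 1 w 0 \<le> circ_dist 1 w v + circ_dist 1 v 0"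
      by (simp_all add: circ_dist_triangle)
    moreover have "circ_dist 1 v w \<le> \<bar>v - w\<bar>" "circ_dist 1 w v \<le> \<bar>v - w\<bar>"
      using circ_dist_le_abs[of 1 v w] circ_dist_le_abs[of 1 w v] by (simp_all add: abs_minus_commute)
    ultimately show "dist (circ_dist 1 v 0) (circ_dist 1 w 0) \<le> 1 * dist v w"
      by (simp add: dist_real_def)
  qed simp
  then have "continuous_on UNIV (\<lambda>w. circ_dist 1 w 0)"
    by (rule lipschitz_on_continuous_on)
  moreover have "(\<lambda>i. (a i - b i) / Ls i) \<longlonglongrightarrow> (A - B) / L"
    using assms by (intro tendsto_intros) auto
  ultimately have "(\<lambda>i. circ_dist 1 ((a i - b i) / Ls i) 0) \<longlonglongrightarrow> circ_dist 1 ((A - B) / L) 0"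
    by (rule continuous_on_tendsto_compose) auto
  then have "(\<lambda>i. Ls i * circ_dist 1 ((a i - b i) / Ls i) 0) \<longlonglongrightarrow> L * circ_dist 1 ((A - B) / L) 0"
    using assms(1) by (rule tendsto_mult[rotated])
  then show ?thesis
    using circ_dist_scale[OF assms(2)] circ_dist_scale[OF assms(3)] by presburger
qed

lemma rcong_eq_if_close: "[x = y] (rmod L) \<Longrightarrow> \<bar>x - y\<bar> < L \<Longrightarrow> x = y"
  using rcong_imp_eq by fastforce

lemma rcong_affine_iff: "\<epsilon> \<in> {-1, 1} \<Longrightarrow> [a + \<epsilon> * x = a + \<epsilon> * y] (rmod L) \<longleftrightarrow> [x = y] (rmod L)"
  by auto

section \<open>Injective unit-speed paths in a circle are arcs\<close>

lemma unit_speed_path_interval_iff: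
  "unit_speed_path False l L f \<longleftrightarrow> (\<forall>t\<in>{0..l}. f t \<in> {0..<L}) \<and>
     (\<forall>t\<in>{0..l}. \<exists>e>0. \<forall>s\<in>{0..l}. \<bar>s - t\<bar> < e \<longrightarrow> circ_dist L (f s) (f t) = \<bar>s - t\<bar>)"
  unfolding unit_speed_path_def pdom_def pdist_def circ_pts_def by auto

lemma locally_constant_on_Ioo:
  fixes g :: "real \<Rightarrow> 'b" and a b :: real
  assumes "\<forall>s\<in>{a<..<b}. \<exists>d>0. \<forall>x\<in>{a<..<b}. \<bar>x - s\<bar> < d \<longrightarrow> g x = g s"
    and "x \<in> {a<..<b}" "y \<in> {a<..<b}"
  shows "g x = g y"
proof (rule connected_local_const[OF connected_Ioo assms(2,3)], intro ballI)
  fix s assume "s \<in> {a<..<b}"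
  then obtain d where "d > 0" "\<forall>x\<in>{a<..<b}. \<bar>x - s\<bar> < d \<longrightarrow> g x = g s"
    using assms(1) by blast
  then show "eventually (\<lambda>y. g s = g y) (at s within {a<..<b})"
    unfolding eventually_at by (metis dist_real_def)
qed

lemma locally_isometric_one_side_affine:
  assumes L: "0 < L" and t: "t = a \<or> t = b" and ab: "a < b" "b - a \<le> L / 4"
    and from_t: "\<forall>s\<in>{a<..<b}. circ_dist L (f s) (f t) = \<bar>s - t\<bar>"
    and local: "\<forall>s\<in>{a<..<b}. \<exists>d>0. \<forall>x\<in>{a<..<b}. \<bar>x - s\<bar> < d \<longrightarrow> circ_dist L (f x) (f s) = \<bar>x - s\<bar>"
  shows "\<exists>\<sigma>\<in>{-1, 1}. \<forall>s\<in>{a<..<b}. [f s = f t + \<sigma> * (s - t)] (rmod L)"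
proof -
  define sg where "sg s = (if [f s = f t + (s - t)] (rmod L) then 1 else - 1 :: real)" for s
  have sg: "sg s \<in> {-1, 1}" for s
    unfolding sg_def by auto
  have affine: "[f s = f t + sg s * (s - t)] (rmod L)" if "s \<in> {a<..<b}" for s
  proof -
    have "[f s = f t + \<bar>s - t\<bar>] (rmod L) \<or> [f s = f t - \<bar>s - t\<bar>] (rmod L)"
      using circ_dist_eqD[OF L from_t[rule_format, OF that]] .
    then have "[f s = f t + (s - t)] (rmod L) \<or> [f s = f t - (s - t)] (rmod L)"
      by (cases "t \<le> s") (auto simp: algebra_simps)
    then show ?thesis
      unfolding sg_def by (auto simp: algebra_simps)
  qed
  have "\<exists>d>0. \<forall>x\<in>{a<..<b}. \<bar>x - s\<bar> < d \<longrightarrow> sg x = sg s" if s: "s \<in> {a<..<b}" for s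
  proof -
    obtain d where d: "d > 0" "\<forall>x\<in>{a<..<b}. \<bar>x - s\<bar> < d \<longrightarrow> circ_dist L (f x) (f s) = \<bar>x - s\<bar>"
      using local s by blast
    have "sg x = sg s" if x: "x \<in> {a<..<b}" "\<bar>x - s\<bar> < d" for x
    proof (rule ccontr)
      assume ne: "sg x \<noteq> sg s"
      have "\<bar>x - s\<bar> = circ_dist L (f t + sg x * (x - t)) (f t + sg s * (s - t))"
        using d(2) x circ_dist_rcong[OF L affine[OF x(1)] affine[OF s]] by simp
      also have "\<dots> = \<bar>(f t + sg x * (x - t)) - (f t + sg s * (s - t))\<bar>"
        by (rule circ_dist_eq_abs[OF L]) (use sg[of x] sg[of s] x s ab t in \<open>auto simp: abs_if\<close>)
      also have "\<dots> = \<bar>(x - t) + (s - t)\<bar>"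
        using sg[of x] sg[of s] ne by (auto simp: abs_if)
      finally show False
        using x s t by (auto simp: abs_if split: if_splits)
    qed
    then show ?thesis using d(1) by blast
  qed
  then have loc_const: "\<forall>s\<in>{a<..<b}. \<exists>d>0. \<forall>x\<in>{a<..<b}. \<bar>x - s\<bar> < d \<longrightarrow> sg x = sg s"
    by blast
  define m where "m = (a + b) / 2"
  have m: "m \<in> {a<..<b}"
    using ab unfolding m_def by auto
  have "[f s = f t + sg m * (s - t)] (rmod L)" if s: "s \<in> {a<..<b}" for s
    using affine[OF s] unfolding locally_constant_on_Ioo[OF loc_const s m] .
  then show ?thesis
    using sg[of m] by blast
qed

lemma unit_speed_path_locally_affine:
  assumes L: "0 < L" and f: "unit_speed_path False l L f" and inj: "inj_on f {0<..<l}"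
    and t: "t \<in> {0<..<l}"
  shows "\<exists>\<sigma>\<in>{-1, 1}. \<exists>e>0. e \<le> L / 4 \<and>
           (\<forall>s. \<bar>s - t\<bar> < e \<longrightarrow> s \<in> {0<..<l} \<and> [f s = f t + \<sigma> * (s - t)] (rmod L))"
proof -
  have f01: "\<forall>t\<in>{0..l}. f t \<in> {0..<L}"
    and loc: "\<forall>t\<in>{0..l}. \<exists>e>0. \<forall>s\<in>{0..l}. \<bar>s - t\<bar> < e \<longrightarrow> circ_dist L (f s) (f t) = \<bar>s - t\<bar>"
    using f unfolding unit_speed_path_interval_iff by auto
  obtain et where et: "et > 0" "\<forall>s\<in>{0..l}. \<bar>s - t\<bar> < et \<longrightarrow> circ_dist L (f s) (f t) = \<bar>s - t\<bar>"
    using loc t by fastforce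
  define e where "e = min (min et t) (min (l - t) (L / 4))"
  have e: "0 < e" "e \<le> et" "e \<le> t" "e \<le> l - t" "e \<le> L / 4"
    using et t L unfolding e_def by (auto simp: min_def)
  have local: "\<forall>s\<in>{a<..<b}. \<exists>d>0. \<forall>x\<in>{a<..<b}. \<bar>x - s\<bar> < d \<longrightarrow> circ_dist L (f x) (f s) = \<bar>x - s\<bar>"
    if "{a<..<b} \<subseteq> {0..l}" for a b
    using loc that by (meson subsetD)
  have "{t<..<t+e} \<subseteq> {0..l}" "{t-e<..<t} \<subseteq> {0..l}"
    using e t by auto
  have "\<exists>\<sigma>\<in>{-1, 1}. \<forall>s\<in>{t<..<t+e}. [f s = f t + \<sigma> * (s - t)] (rmod L)"
    by (rule locally_isometric_one_side_affine[OF L _ _ _ _ local[OF \<open>{t<..<t+e} \<subseteq> {0..l}\<close>]])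
      (use e et t in auto)
  then obtain \<sigma>1 where \<sigma>1: "\<sigma>1 \<in> {-1, 1}" "\<forall>s\<in>{t<..<t+e}. [f s = f t + \<sigma>1 * (s - t)] (rmod L)"
    by blast
  have "\<exists>\<sigma>\<in>{-1, 1}. \<forall>s\<in>{t-e<..<t}. [f s = f t + \<sigma> * (s - t)] (rmod L)"
    by (rule locally_isometric_one_side_affine[OF L _ _ _ _ local[OF \<open>{t-e<..<t} \<subseteq> {0..l}\<close>]])
      (use e et t in auto)
  then obtain \<sigma>2 where \<sigma>2: "\<sigma>2 \<in> {-1, 1}" "\<forall>s\<in>{t-e<..<t}. [f s = f t + \<sigma>2 * (s - t)] (rmod L)"
    by blast
  have "\<sigma>1 = \<sigma>2"
  proof (rule ccontr)
    assume "\<sigma>1 \<noteq> \<sigma>2"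
    then have opp: "\<sigma>2 * (- (e/2)) = \<sigma>1 * (e/2)"
      using \<sigma>1(1) \<sigma>2(1) by auto
    have "t - e/2 \<in> {t-e<..<t}"
      using e by simp
    then have "[f (t - e/2) = f t + \<sigma>2 * (t - e/2 - t)] (rmod L)"
      using \<sigma>2(2) by blast
    also have "f t + \<sigma>2 * (t - e/2 - t) = f t + \<sigma>1 * (e/2)"
      using opp by simp
    finally have "[f (t - e/2) = f t + \<sigma>1 * (e/2)] (rmod L)" .
    moreover have "[f (t + e/2) = f t + \<sigma>1 * (e/2)] (rmod L)"
      using \<sigma>1(2)[rule_format, of "t + e/2"] e by simp
    ultimately have "[f (t + e/2) = f (t - e/2)] (rmod L)"
      by (meson rcong_sym rcong_trans)
    moreover have "f (t + e/2) \<in> {0..<L}" "f (t - e/2) \<in> {0..<L}"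
      using f01 e t by auto
    ultimately have "f (t + e/2) = f (t - e/2)"
      by (intro rcong_eq_if_close) auto
    moreover have "t + e/2 \<in> {0<..<l}" "t - e/2 \<in> {0<..<l}"
      using e t by auto
    ultimately have "t + e/2 = t - e/2"
      using inj by (meson inj_onD)
    then show False
      using e by simp
  qed
  have "s \<in> {0<..<l} \<and> [f s = f t + \<sigma>1 * (s - t)] (rmod L)" if "\<bar>s - t\<bar> < e" for s
  proof -
    have "s \<in> {t<..<t+e} \<or> s \<in> {t-e<..<t} \<or> s = t"
      using that by auto
    then have "[f s = f t + \<sigma>1 * (s - t)] (rmod L)"
      using \<sigma>1(2) \<sigma>2(2) unfolding \<open>\<sigma>1 = \<sigma>2\<close> by (elim disjE) auto
    moreover have "s \<in> {0<..<l}"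
      using that e t by auto
    ultimately show ?thesis
      by blast
  qed
  then show ?thesis
    using \<sigma>1(1) e by blast
qed

lemma affine_charts_agree:
  assumes L: "0 < L" and \<sigma>: "\<sigma> \<in> {-1, 1}" "\<sigma>' \<in> {-1, 1}" and e: "e \<le> L / 4" "0 < e'"
    and at_t: "\<forall>s. \<bar>s - t\<bar> < e \<longrightarrow> [f s = f t + \<sigma> * (s - t)] (rmod L)"
    and at_x: "\<forall>s. \<bar>s - x\<bar> < e' \<longrightarrow> [f s = f x + \<sigma>' * (s - x)] (rmod L)"
    and x: "\<bar>x - t\<bar> < e / 2"
  shows "\<sigma>' = \<sigma> \<and> [f x - \<sigma> * x = f t - \<sigma> * t] (rmod L)"
proof -
  have "0 < e"
    using x abs_ge_zero[of "x - t"] by linarith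
  define h where "h = min e' (e / 2) / 2"
  have h: "0 < h" "h < e'" "h \<le> e / 4"
    using e \<open>0 < e\<close> unfolding h_def by auto
  have r1: "[f (x + h) = f x + \<sigma>' * h] (rmod L)"
    using at_x[rule_format, of "x + h"] h by simp
  have "\<bar>x + h - t\<bar> \<le> \<bar>x - t\<bar> + h"
    using abs_triangle_ineq[of "x - t" h] h by (simp add: algebra_simps)
  then have r2: "[f (x + h) = f t + \<sigma> * (x + h - t)] (rmod L)"
    using at_t[rule_format, of "x + h"] x h by simp
  have ft: "[f x = f t + \<sigma> * (x - t)] (rmod L)"
    using at_t[rule_format, of x] x h by simp
  then have r3: "[f x + \<sigma> * h = f t + \<sigma> * (x + h - t)] (rmod L)"
    using rcong_add_right_cancel[of "f x" "\<sigma> * h" "f t + \<sigma> * (x - t)" L] by (simp add: algebra_simps)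
  have "[f x + \<sigma>' * h = f x + \<sigma> * h] (rmod L)"
    using rcong_trans[OF rcong_sym[OF r1] rcong_trans[OF r2 rcong_sym[OF r3]]] .
  moreover have "\<bar>(f x + \<sigma>' * h) - (f x + \<sigma> * h)\<bar> < L"
    using \<sigma> h e L by auto
  ultimately have "\<sigma>' * h = \<sigma> * h"
    using rcong_eq_if_close by fastforce
  then have "\<sigma>' = \<sigma>"
    using h by simp
  moreover have "[f x - \<sigma> * x = f t - \<sigma> * t] (rmod L)"
    using ft rcong_diff_right_cancel[of "f x" "\<sigma> * x" "f t + \<sigma> * (x - t)" L] by (simp add: algebra_simps)
  ultimately show ?thesis
    by simp
qed

lemma rcong_affine_on_closure:
  assumes L: "0 < L" and l: "0 < l" and f: "unit_speed_path False l L f" and \<epsilon>: "\<epsilon> \<in> {-1, 1}"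
    and interior: "\<forall>s\<in>{0<..<l}. [f s = c + \<epsilon> * s] (rmod L)" and t: "t \<in> {0..l}"
  shows "[f t = c + \<epsilon> * t] (rmod L)"
proof -
  obtain e where e: "e > 0" "\<forall>s\<in>{0..l}. \<bar>s - t\<bar> < e \<longrightarrow> circ_dist L (f s) (f t) = \<bar>s - t\<bar>"
    using f t unfolding unit_speed_path_interval_iff by blast
  define D where "D = circ_dist L (c + \<epsilon> * t) (f t)"
  have "D = 0"
  proof (rule ccontr)
    assume "D \<noteq> 0"
    then have "0 < D"
      using circ_dist_nonneg[OF L] unfolding D_def by (metis less_eq_real_def)
    define \<delta> where "\<delta> = min e (min l D) / 4"
    have \<delta>: "0 < \<delta>" "\<delta> < e" "\<delta> < l / 2" "2 * \<delta> < D"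
      using e l \<open>0 < D\<close> unfolding \<delta>_def by (auto simp: min_def)
    define s where "s = (if t \<le> l / 2 then t + \<delta> else t - \<delta>)"
    have s: "s \<in> {0<..<l}" "\<bar>s - t\<bar> = \<delta>"
      using t \<delta> unfolding s_def by auto
    have "circ_dist L (c + \<epsilon> * s) (f t) = circ_dist L (f s) (f t)"
      using circ_dist_rcong[OF L rcong_sym[OF interior[rule_format, OF s(1)]] rcong_refl] .
    also have "\<dots> = \<delta>"
      using e(2) s \<delta> by auto
    finally have "circ_dist L (c + \<epsilon> * s) (f t) = \<delta>" .
    moreover have "circ_dist L (c + \<epsilon> * t) (c + \<epsilon> * s) \<le> \<delta>"
      using circ_dist_le_abs[OF L, of t s] s(2) circ_dist_affine[OF \<epsilon>] by (simp add: abs_minus_commute)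
    ultimately have "D \<le> 2 * \<delta>"
      using circ_dist_triangle[OF L, where x = "c + \<epsilon> * t" and y = "c + \<epsilon> * s" and z = "f t"]
      unfolding D_def by linarith
    then show False
      using \<delta> by linarith
  qed
  then show ?thesis
    using circ_dist_eq_0_iff[OF L] rcong_sym unfolding D_def by blast
qed

lemma unit_speed_path_affine_on_interior:
  assumes L: "0 < L" and l: "0 < l" and f: "unit_speed_path False l L f" and inj: "inj_on f {0<..<l}"
  shows "\<exists>\<epsilon>\<in>{-1, 1}. \<exists>c. \<forall>t\<in>{0<..<l}. [f t = c + \<epsilon> * t] (rmod L)"
proof -
  define P where "P t \<sigma> e \<longleftrightarrow> \<sigma> \<in> {-1, 1} \<and> e > 0 \<and> e \<le> L / 4 \<and>
      (\<forall>s. \<bar>s - t\<bar> < e \<longrightarrow> s \<in> {0<..<l} \<and> [f s = f t + \<sigma> * (s - t)] (rmod L))" for t \<sigma> e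
  define sgn where "sgn t = (SOME \<sigma>. \<exists>e. P t \<sigma> e)" for t
  have sgn: "\<exists>e. P t (sgn t) e" if "t \<in> {0<..<l}" for t
    using unit_speed_path_locally_affine[OF L f inj that] someI_ex[of "\<lambda>\<sigma>. \<exists>e. P t \<sigma> e"]
    unfolding sgn_def P_def by blast
  define F where "F t = (sgn t, (f t - sgn t * t) rmod L)" for t
  have "\<exists>d>0. \<forall>x\<in>{0<..<l}. \<bar>x - t\<bar> < d \<longrightarrow> F x = F t" if t: "t \<in> {0<..<l}" for t
  proof -
    obtain e where e: "P t (sgn t) e"
      using sgn[OF t] by blast
    have "F x = F t" if x: "x \<in> {0<..<l}" "\<bar>x - t\<bar> < e / 2" for x
    proof -
      obtain e' where "P x (sgn x) e'"
        using sgn[OF x(1)] by blast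
      then have "sgn x = sgn t" "[f x - sgn t * x = f t - sgn t * t] (rmod L)"
        using affine_charts_agree[OF L _ _ _ _ _ _ x(2)] e unfolding P_def by blast+
      then show ?thesis
        unfolding F_def rcong_def by simp
    qed
    moreover have "e / 2 > 0"
      using e unfolding P_def by simp
    ultimately show ?thesis
      by blast
  qed
  then have F_const: "F t = F (l / 2)" if "t \<in> {0<..<l}" for t
    using locally_constant_on_Ioo[of 0 l F t "l / 2"] that l by simp
  have "[f t = (f (l / 2) - sgn (l / 2) * (l / 2)) + sgn (l / 2) * t] (rmod L)" if "t \<in> {0<..<l}" for t
  proof -
    have "sgn t = sgn (l / 2)" "[f t - sgn (l / 2) * t = f (l / 2) - sgn (l / 2) * (l / 2)] (rmod L)"
      using F_const[OF that] unfolding F_def rcong_def by auto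
    then show ?thesis
      using rcong_add_right_cancel[of "f t - sgn (l / 2) * t" "sgn (l / 2) * t" _ L] by simp
  qed
  moreover have "sgn (l / 2) \<in> {-1, 1}"
    using sgn[of "l / 2"] l unfolding P_def by auto
  ultimately show ?thesis
    by blast
qed

lemma unit_speed_path_affine:
  assumes L: "0 < L" and l: "0 < l" and f: "unit_speed_path False l L f" and inj: "inj_on f {0<..<l}"
  shows "\<exists>\<epsilon>\<in>{-1, 1}. \<forall>t\<in>{0..l}. f t = (f 0 + \<epsilon> * t) rmod L"
proof -
  obtain \<epsilon> c where \<epsilon>: "\<epsilon> \<in> {-1, 1}" and interior: "\<forall>t\<in>{0<..<l}. [f t = c + \<epsilon> * t] (rmod L)"
    using unit_speed_path_affine_on_interior[OF L l f inj] by blast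
  have closure: "[f t = c + \<epsilon> * t] (rmod L)" if "t \<in> {0..l}" for t
    using rcong_affine_on_closure[OF L l f \<epsilon> interior that] .
  have "f t = (f 0 + \<epsilon> * t) rmod L" if t: "t \<in> {0..l}" for t
  proof -
    have "[f 0 + \<epsilon> * t = c + \<epsilon> * t] (rmod L)"
      using closure[of 0] l by simp
    then have "[f t = f 0 + \<epsilon> * t] (rmod L)"
      using closure[OF t] by (meson rcong_sym rcong_trans)
    moreover have "f t \<in> {0..<L}"
      using f t unfolding unit_speed_path_interval_iff by blast
    ultimately show ?thesis
      using L unfolding rcong_def by simp
  qed
  then show ?thesis
    using \<epsilon> by blast
qed

lemma affine_path_length_le:
  assumes L: "0 < L" and \<epsilon>: "\<epsilon> \<in> {-1, 1}" and f: "\<forall>t\<in>{0..l}. f t = (a + \<epsilon> * t) rmod L"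
    and inj: "inj_on f {0<..<l}"
  shows "l \<le> L"
proof (rule ccontr)
  assume "\<not> l \<le> L"
  define t where "t = (l - L) / 2"
  have t: "t \<in> {0<..<l}" "t + L \<in> {0<..<l}"
    using L \<open>\<not> l \<le> L\<close> unfolding t_def by (auto simp: field_simps)
  have "[a + \<epsilon> * (t + L) = a + \<epsilon> * t] (rmod L)"
    using \<epsilon> unfolding rcong_altdef by (auto intro: exI[of _ 1] exI[of _ "-1"] simp: algebra_simps)
  then have "f (t + L) = f t"
    using f t unfolding rcong_def by auto
  then show False
    using inj t L by (metis inj_onD less_irrefl less_add_same_cancel1)
qed

lemma unit_speed_circle_path_arc:
  assumes L: "0 < L" and f: "unit_speed_path True l L f" and inj: "inj_on f {0..<l}"
    and m: "0 < m" "m < l"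
  shows "\<exists>\<epsilon>\<in>{-1, 1}. \<forall>t\<in>{0..m}. f t = (f 0 + \<epsilon> * t) rmod L"
proof -
  have f01: "\<forall>t\<in>{0..<l}. f t \<in> {0..<L}"
    and loc: "\<forall>t\<in>{0..<l}. \<exists>e>0. \<forall>s\<in>{0..<l}. circ_dist l s t < e \<longrightarrow> circ_dist L (f s) (f t) = circ_dist l s t"
    using f unfolding unit_speed_path_def pdom_def pdist_def circ_pts_def by (simp_all add: image_subset_iff)
  have "\<exists>e>0. \<forall>s\<in>{0..m}. \<bar>s - t\<bar> < e \<longrightarrow> circ_dist L (f s) (f t) = \<bar>s - t\<bar>" if t: "t \<in> {0..m}" for t
  proof -
    have "t \<in> {0..<l}"
      using t m by simp
    then obtain e where e: "e > 0"
      "\<forall>s\<in>{0..<l}. circ_dist l s t < e \<longrightarrow> circ_dist L (f s) (f t) = circ_dist l s t"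
      using loc by blast
    have "circ_dist L (f s) (f t) = \<bar>s - t\<bar>" if s: "s \<in> {0..m}" "\<bar>s - t\<bar> < min e (l / 2)" for s
    proof -
      have "circ_dist l s t = \<bar>s - t\<bar>"
        by (rule circ_dist_eq_abs) (use s m in simp_all)
      moreover have "s \<in> {0..<l}"
        using s m by simp
      ultimately show ?thesis
        using e(2) s by simp
    qed
    moreover have "0 < min e (l / 2)"
      using e(1) m by simp
    ultimately show ?thesis
      by blast
  qed
  then have "unit_speed_path False m L f"
    unfolding unit_speed_path_interval_iff using f01 m by simp
  moreover have "inj_on f {0<..<m}"
    using m by (intro inj_on_subset[OF inj]) auto
  ultimately show ?thesis
    by (rule unit_speed_path_affine[OF L m(1)])
qed

lemma unit_speed_circle_path_length:
  assumes L: "0 < L" and l: "0 < l" and f: "unit_speed_path True l L f" and inj: "inj_on f {0..<l}"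
  shows "l = L"
proof -
  note arc = unit_speed_circle_path_arc[OF L f inj]
  have "l \<le> L"
  proof (rule ccontr)
    assume "\<not> l \<le> L"
    define m where "m = (l + L) / 2"
    have m: "0 < m" "m < l" "L < m"
      using L \<open>\<not> l \<le> L\<close> unfolding m_def by auto
    then obtain \<epsilon> where "\<epsilon> \<in> {-1, 1}" "\<forall>t\<in>{0..m}. f t = (f 0 + \<epsilon> * t) rmod L"
      using arc by blast
    moreover have "inj_on f {0<..<m}"
      using m by (intro inj_on_subset[OF inj]) auto
    ultimately have "m \<le> L"
      by (rule affine_path_length_le[OF L])
    then show False
      using m by simp
  qed
  have "\<forall>t\<in>{0..<l}. \<exists>e>0. \<forall>s\<in>{0..<l}. circ_dist l s t < e \<longrightarrow> circ_dist L (f s) (f t) = circ_dist l s t"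
    using f unfolding unit_speed_path_def pdom_def pdist_def by simp
  moreover have "0 \<in> {0..<l}"
    using l by simp
  ultimately obtain e where e: "e > 0"
    "\<forall>s\<in>{0..<l}. circ_dist l s 0 < e \<longrightarrow> circ_dist L (f s) (f 0) = circ_dist l s 0"
    by blast
  define h where "h = min e l / 4"
  have h: "0 < h" "h < e" "h \<le> l / 4"
    using e l unfolding h_def by (auto simp: min_def)
  have "circ_dist l (l - h) 0 = h"
    using circ_dist_eq_diff[OF l, of "l - h"] h by simp
  moreover have "l - h \<in> {0..<l}"
    using h by simp
  ultimately have "circ_dist L (f (l - h)) (f 0) = h"
    using e(2) h by simp
  moreover have "0 < l - h" "l - h < l"
    using h l by simp_all
  then obtain \<epsilon> where \<epsilon>: "\<epsilon> \<in> {-1, 1}" "\<forall>t\<in>{0..l - h}. f t = (f 0 + \<epsilon> * t) rmod L"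
    using arc by blast
  have fl: "f (l - h) = (f 0 + \<epsilon> * (l - h)) rmod L"
    by (rule \<epsilon>(2)[rule_format]) (use h in simp)
  have "circ_dist L (f 0 + \<epsilon> * (l - h)) (f 0 + \<epsilon> * 0) = circ_dist L (f (l - h)) (f 0)"
    unfolding fl by (rule circ_dist_rcong[OF L]) simp_all
  ultimately have "circ_dist L (f 0 + \<epsilon> * (l - h)) (f 0 + \<epsilon> * 0) = h"
    by simp
  then have "circ_dist L (l - h) 0 = h"
    using circ_dist_affine[OF \<epsilon>(1), of L "f 0" "l - h" 0] by simp
  then have "[l - h = 0 + h] (rmod L) \<or> [l - h = 0 - h] (rmod L)"
    by (rule circ_dist_eqD[OF L])
  moreover have "\<not> [l - h = h] (rmod L)"
  proof
    assume "[l - h = h] (rmod L)"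
    then have "l - h = h"
      by (rule rcong_eq_if_close) (use h \<open>l \<le> L\<close> in simp)
    then show False
      using h by simp
  qed
  ultimately have "[l - h = - h] (rmod L)"
    by simp
  then have "[l = 0] (rmod L)"
    using rcong_add_right_cancel[of l "- h" 0 L] by simp
  show "l = L"
  proof (rule ccontr)
    assume "l \<noteq> L"
    then have "l = 0"
      using rcong_eq_if_close[OF \<open>[l = 0] (rmod L)\<close>] l \<open>l \<le> L\<close> by simp
    then show False
      using l by simp
  qed
qed

section \<open>Monotone short lifts of circle maps\<close>

definition mono_short_on :: "real set \<Rightarrow> (real \<Rightarrow> real) \<Rightarrow> bool" where
  "mono_short_on S g \<longleftrightarrow> (\<forall>x\<in>S. \<forall>y\<in>S. x \<le> y \<longrightarrow> g x \<le> g y \<and> g y - g x \<le> y - x)"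

lemma mono_short_onD:
  "mono_short_on S g \<Longrightarrow> x \<in> S \<Longrightarrow> y \<in> S \<Longrightarrow> x \<le> y \<Longrightarrow> g x \<le> g y \<and> g y - g x \<le> y - x"
  unfolding mono_short_on_def by blast

lemma mono_short_on_continuous_on:
  assumes "mono_short_on S g" shows "continuous_on S g"
proof (rule lipschitz_on_continuous_on[of 1], rule lipschitz_onI)
  fix x y assume "x \<in> S" "y \<in> S"
  then show "dist (g x) (g y) \<le> 1 * dist x y"
    using mono_short_onD[OF assms \<open>x \<in> S\<close> \<open>y \<in> S\<close>] mono_short_onD[OF assms \<open>y \<in> S\<close> \<open>x \<in> S\<close>]
    by (cases "x \<le> y") (auto simp: dist_real_def)
qed simp

definition mono_short_lift :: "real \<Rightarrow> real \<Rightarrow> (real \<Rightarrow> real) \<Rightarrow> bool" where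
  "mono_short_lift L L' \<psi> \<longleftrightarrow> mono_short_on UNIV \<psi> \<and> (\<forall>u. \<psi> (u + L) = \<psi> u + L')"

lemma mono_short_liftD:
  assumes "mono_short_lift L L' \<psi>"
  shows "\<And>u v. u \<le> v \<Longrightarrow> \<psi> u \<le> \<psi> v \<and> \<psi> v - \<psi> u \<le> v - u" and "\<And>u. \<psi> (u + L) = \<psi> u + L'"
  using assms unfolding mono_short_lift_def mono_short_on_def by auto

lemma mono_short_lift_shift:
  assumes "mono_short_lift L L' \<psi>" shows "\<psi> (u + of_int n * L) = \<psi> u + of_int n * L'"
proof (induction n rule: int_induct[where k = 0])
  case (step1 n)
  have "\<psi> ((u + of_int n * L) + L) = \<psi> (u + of_int n * L) + L'"
    using assms unfolding mono_short_lift_def by blast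
  then show ?case
    using step1.IH by (simp add: algebra_simps)
next
  case (step2 n)
  have "\<psi> ((u + of_int (n - 1) * L) + L) = \<psi> (u + of_int (n - 1) * L) + L'"
    using assms unfolding mono_short_lift_def by blast
  then show ?case
    using step2.IH by (simp add: algebra_simps)
qed simp

lemma mono_short_lift_rcong:
  assumes "mono_short_lift L L' \<psi>" and "[u = v] (rmod L)"
  shows "[\<psi> u = \<psi> v] (rmod L')"
proof -
  obtain n where "v = u + of_int n * L"
    using assms(2) unfolding rcong_altdef by blast
  then have "\<psi> v = \<psi> u + of_int n * L'"
    using mono_short_lift_shift[OF assms(1)] by simp
  then show ?thesis
    unfolding rcong_altdef by blast
qed

lemma mono_short_lift_translate:
  assumes "mono_short_lift L L' \<psi>" shows "mono_short_lift L L' (\<lambda>u. \<psi> (u + k))"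
proof -
  have "\<psi> (u + k) \<le> \<psi> (v + k) \<and> \<psi> (v + k) - \<psi> (u + k) \<le> v - u" if "u \<le> v" for u v
    using mono_short_liftD(1)[OF assms, of "u + k" "v + k"] that by simp
  moreover have "\<psi> (u + L + k) = \<psi> (u + k) + L'" for u
    using mono_short_liftD(2)[OF assms, of "u + k"] by (simp add: algebra_simps)
  ultimately show ?thesis
    unfolding mono_short_lift_def mono_short_on_def by simp
qed

lemma mono_short_lift_reflect:
  assumes "mono_short_lift L L' \<psi>" shows "mono_short_lift L L' (\<lambda>u. - \<psi> (k - u))"
proof -
  have "- \<psi> (k - u) \<le> - \<psi> (k - v) \<and> - \<psi> (k - v) - - \<psi> (k - u) \<le> v - u" if "u \<le> v" for u v
    using mono_short_liftD(1)[OF assms, of "k - v" "k - u"] that by simp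
  moreover have "- \<psi> (k - (u + L)) = - \<psi> (k - u) + L'" for u
    using mono_short_liftD(2)[OF assms, of "k - (u + L)"] by (simp add: algebra_simps)
  ultimately show ?thesis
    unfolding mono_short_lift_def mono_short_on_def by simp
qed

lemma mono_short_lift_rebase:
  assumes \<psi>: "mono_short_lift L L' \<psi>" and \<epsilon>: "\<epsilon> \<in> {-1, 1}" and \<epsilon>': "\<epsilon>' \<in> {-1, 1}" and s: "s \<in> {-1, 1}"
    and lift: "\<forall>w. \<pi> ((a + \<epsilon> * w) rmod L) = (b + \<epsilon>' * \<psi> w) rmod L'"
  shows "\<exists>\<psi>' s'. s' \<in> {-1, 1} \<and> mono_short_lift L L' \<psi>' \<and>
           (\<forall>u. \<pi> ((c + s * u) rmod L) = (b + s' * \<psi>' u) rmod L')"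
proof -
  define k where "k = \<epsilon> * (c - a)"
  show ?thesis
  proof (cases "s = \<epsilon>")
    case True
    have "c + s * u = a + \<epsilon> * (u + k)" for u
      unfolding k_def True using \<epsilon> by (auto simp: algebra_simps)
    then show ?thesis
      using lift \<epsilon>' mono_short_lift_translate[OF \<psi>] by (intro exI[of _ "\<lambda>u. \<psi> (u + k)"] exI[of _ \<epsilon>']) simp
  next
    case False
    then have "s = - \<epsilon>"
      using \<epsilon> s by auto
    have "c + s * u = a + \<epsilon> * (k - u)" for u
      unfolding k_def \<open>s = - \<epsilon>\<close> using \<epsilon> by (auto simp: algebra_simps)
    moreover have "- \<epsilon>' \<in> {-1, 1}"
      using \<epsilon>' by auto
    ultimately show ?thesis
      using lift mono_short_lift_reflect[OF \<psi>]
      by (intro exI[of _ "\<lambda>u. - \<psi> (k - u)"] exI[of _ "- \<epsilon>'"]) simp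
  qed
qed

lemma rmod_lift_extend:
  assumes L: "0 < L" and \<psi>: "mono_short_lift L L' \<psi>" and \<epsilon>: "\<epsilon> \<in> {-1, 1}" and \<epsilon>': "\<epsilon>' \<in> {-1, 1}"
    and period: "\<forall>\<rho>\<in>{0..<L}. \<pi> ((a + \<epsilon> * \<rho>) rmod L) = (b + \<epsilon>' * \<psi> \<rho>) rmod L'"
  shows "\<pi> ((a + \<epsilon> * w) rmod L) = (b + \<epsilon>' * \<psi> w) rmod L'"
proof -
  have w: "[w = w rmod L] (rmod L)"
    by simp
  have "(a + \<epsilon> * w) rmod L = (a + \<epsilon> * (w rmod L)) rmod L"
    using rcong_affine_iff[OF \<epsilon>, of a w "w rmod L" L] w unfolding rcong_def by blast
  moreover have "(b + \<epsilon>' * \<psi> w) rmod L' = (b + \<epsilon>' * \<psi> (w rmod L)) rmod L'"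
    using rcong_affine_iff[OF \<epsilon>'] mono_short_lift_rcong[OF \<psi> w] unfolding rcong_def by blast
  moreover have "w rmod L \<in> {0..<L}"
    using L by (simp add: rmod_nonneg rmod_less)
  ultimately show ?thesis
    using period by simp
qed

section \<open>Lifting a single tightening step\<close>

lemma rmod_decomp: "0 < L \<Longrightarrow> u = u rmod L + of_int \<lfloor>u / L\<rfloor> * L"
  unfolding rmod_def by simp

definition gap_time :: "real \<Rightarrow> real \<Rightarrow> real \<Rightarrow> real" where
  "gap_time L l u = of_int \<lfloor>u / L\<rfloor> * (L - l) + max 0 (u rmod L - l)"

lemma gap_time_eq:
  assumes "0 \<le> u" "u < L" shows "gap_time L l u = max 0 (u - l)"
  using assms unfolding gap_time_def by (simp add: floor_eq_iff)

lemma gap_time_period: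
  assumes "0 < L" shows "gap_time L l (u + L) = gap_time L l u + (L - l)"
proof -
  have "\<lfloor>(u + L) / L\<rfloor> = \<lfloor>u / L\<rfloor> + 1"
    using assms by (simp add: add_divide_distrib)
  moreover have "(u + L) rmod L = u rmod L"
    using assms unfolding rmod_def by (simp add: add_divide_distrib algebra_simps)
  ultimately show ?thesis
    unfolding gap_time_def by (simp add: algebra_simps)
qed

lemma gap_time_mono_short:
  assumes L: "0 < L" and l: "0 \<le> l" "l \<le> L" and uv: "u \<le> v"
  shows "0 \<le> gap_time L l v - gap_time L l u \<and> gap_time L l v - gap_time L l u \<le> v - u"
proof -
  define n m where "n = \<lfloor>u / L\<rfloor>" and "m = \<lfloor>v / L\<rfloor>"
  define ru rv where "ru = u rmod L" and "rv = v rmod L"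
  have r: "0 \<le> ru" "ru < L" "0 \<le> rv" "rv < L"
    using L unfolding ru_def rv_def by (simp_all add: rmod_nonneg rmod_less)
  have u: "u = ru + of_int n * L" and v: "v = rv + of_int m * L"
    unfolding ru_def rv_def n_def m_def using rmod_decomp[OF L] by blast+
  have "n \<le> m"
    unfolding n_def m_def using uv L by (intro floor_mono divide_right_mono) auto
  have d: "gap_time L l v - gap_time L l u = of_int (m - n) * (L - l) + max 0 (rv - l) - max 0 (ru - l)"
    unfolding gap_time_def n_def m_def ru_def rv_def by (simp add: algebra_simps)
  have vu: "v - u = of_int (m - n) * L + rv - ru"
    unfolding u v by (simp add: algebra_simps)
  show ?thesis
  proof (cases "n = m")
    case True
    then show ?thesis
      unfolding d vu using uv u v by (auto simp: max_def)
  next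
    case False
    then have K: "1 \<le> (of_int (m - n) :: real)"
      using \<open>n \<le> m\<close> by simp
    then have "L - l \<le> of_int (m - n) * (L - l)" "l \<le> of_int (m - n) * l"
      using l by (simp_all add: mult_le_cancel_right1)
    then show ?thesis
      unfolding d vu using r l by (auto simp: max_def algebra_simps)
  qed
qed

lemma gap_compression_lift:
  assumes L: "0 < L" and l: "0 \<le> l" "l \<le> L" and r: "0 \<le> r" "r \<le> 1"
    and L': "(1 - r) * (L - l) = L - L'"
  shows "mono_short_lift L L' (\<lambda>u. u - (1 - r) * gap_time L l u)"
proof -
  have "u - (1 - r) * gap_time L l u \<le> v - (1 - r) * gap_time L l v \<and>
      (v - (1 - r) * gap_time L l v) - (u - (1 - r) * gap_time L l u) \<le> v - u" if "u \<le> v" for u v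
  proof -
    have M: "0 \<le> gap_time L l v - gap_time L l u" "gap_time L l v - gap_time L l u \<le> v - u"
      using gap_time_mono_short[OF L l that] by auto
    have "(1 - r) * (gap_time L l v - gap_time L l u) \<le> gap_time L l v - gap_time L l u"
      using mult_right_mono[OF _ M(1), of "1 - r" 1] r by simp
    moreover have "0 \<le> (1 - r) * (gap_time L l v - gap_time L l u)"
      using M(1) r by simp
    ultimately show ?thesis
      using M by (simp add: algebra_simps)
  qed
  moreover have "u + L - (1 - r) * gap_time L l (u + L) = u - (1 - r) * gap_time L l u + L'" for u
    using L' unfolding gap_time_period[OF L] by (simp add: algebra_simps)
  ultimately show ?thesis
    unfolding mono_short_lift_def mono_short_on_def by simp
qed

lemma circ_dist_arc_point:
  assumes L': "0 < L'" "l \<le> L'" "L' < 2 * l" and \<epsilon>: "\<epsilon> \<in> {-1, 1}"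
    and d: "0 \<le> d1" "0 \<le> d2" "d1 + d2 = L' - l"
    and y1: "circ_dist L' y (b + \<epsilon> * l) = d1" and y0: "circ_dist L' y b = d2"
  shows "[y = b + \<epsilon> * (l + d1)] (rmod L')"
proof (cases "d1 = 0")
  case True
  then show ?thesis
    using y1 circ_dist_eq_0_iff[OF L'(1)] by simp
next
  case False
  define z where "z = \<epsilon> * (y - b)"
  have y: "y = b + \<epsilon> * z"
    using \<epsilon> unfolding z_def by auto
  have "circ_dist L' z l = d1" "circ_dist L' z 0 = d2"
    using y1 y0 circ_dist_affine[OF \<epsilon>, of L' b z l] circ_dist_affine[OF \<epsilon>, of L' b z 0]
    unfolding y by simp_all
  then have z1: "[z = l + d1] (rmod L') \<or> [z = l - d1] (rmod L')"
    and z0: "[z = d2] (rmod L') \<or> [z = - d2] (rmod L')"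
    using circ_dist_eqD[OF L'(1), of z l d1] circ_dist_eqD[OF L'(1), of z 0 d2] by simp_all
  have "[z = l + d1] (rmod L')"
  proof (rule ccontr)
    assume "\<not> [z = l + d1] (rmod L')"
    then have "[l - d1 = d2] (rmod L') \<or> [l - d1 = - d2] (rmod L')"
      using z1 z0 by (meson rcong_sym rcong_trans)
    then have "[l - d1 - d2 = 0] (rmod L') \<or> [l - d1 + d2 = 0] (rmod L')"
      using rcong_diff_right_cancel[of "l - d1" d2 d2 L'] rcong_add_right_cancel[of "l - d1" d2 "- d2" L']
      by auto
    moreover have "0 < l - d1 - d2" "l - d1 - d2 < L'" "0 < l - d1 + d2" "l - d1 + d2 < L'"
      using L' d False by auto
    ultimately show False
      using rcong_eq_if_close by fastforce
  qed
  then show ?thesis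
    unfolding y using rcong_affine_iff[OF \<epsilon>] by blast
qed

context
  fixes L L' l r a b \<epsilon> \<epsilon>' :: real and \<iota> \<phi> \<pi> :: "real \<Rightarrow> real"
  assumes lengths: "0 < l" "l \<le> L'" "L' < L" "L \<le> 2 * l"
    and signs: "\<epsilon> \<in> {-1, 1}" "\<epsilon>' \<in> {-1, 1}"
    and \<iota>_arc: "\<forall>t\<in>{0..l}. \<iota> t = (a + \<epsilon> * t) rmod L"
    and \<phi>_arc: "\<forall>t\<in>{0..l}. \<phi> t = (b + \<epsilon>' * t) rmod L'"
    and \<pi>_range: "\<forall>x\<in>{0..<L}. \<pi> x \<in> {0..<L'}"
    and \<pi>_\<iota>: "\<forall>t\<in>{0..l}. \<pi> (\<iota> t) = \<phi> t"
    and scale: "\<forall>x\<in>{0..<L} - \<iota> ` {0<..<l}. \<forall>y\<in>{0..<L} - \<iota> ` {0<..<l}.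
      circ_dist L' (\<pi> x) (\<pi> y) = r * circ_dist L x y"

begin

lemma gap_point_in_complement:
  assumes w: "w = 0 \<or> w \<in> {l..<L}"
  shows "(a + \<epsilon> * w) rmod L \<in> {0..<L} - \<iota> ` {0<..<l}"
proof -
  have "(a + \<epsilon> * w) rmod L \<noteq> \<iota> t" if t: "t \<in> {0<..<l}" for t
  proof
    assume "(a + \<epsilon> * w) rmod L = \<iota> t"
    then have "[w = t] (rmod L)"
      using \<iota>_arc t rcong_affine_iff[OF signs(1)] unfolding rcong_def by auto
    moreover have "\<bar>w - t\<bar> < L" "w \<noteq> t"
      using w t lengths by auto
    ultimately show False
      using rcong_eq_if_close by blast
  qed
  moreover have "(a + \<epsilon> * w) rmod L \<in> {0..<L}"
    using lengths by (simp add: rmod_nonneg rmod_less)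
  ultimately show ?thesis
    by blast
qed

lemma arc_ends:
  "\<iota> 0 = (a + \<epsilon> * 0) rmod L" "\<iota> l = (a + \<epsilon> * l) rmod L"
  "\<phi> 0 = (b + \<epsilon>' * 0) rmod L'" "\<phi> l = (b + \<epsilon>' * l) rmod L'"
  "\<iota> 0 \<in> {0..<L} - \<iota> ` {0<..<l}" "\<iota> l \<in> {0..<L} - \<iota> ` {0<..<l}"
  using \<iota>_arc \<phi>_arc lengths gap_point_in_complement[of 0] gap_point_in_complement[of l] by auto

lemma step_ratio: "L' - l = r * (L - l)"
proof -
  have L: "0 < L'" "0 < L"
    using lengths by linarith+
  have "L' - l = circ_dist L' (\<phi> 0) (\<phi> l)"
    unfolding arc_ends circ_dist_rmod[OF L(1)] circ_dist_affine[OF signs(2)] circ_dist_commute[of L' 0]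
    using circ_dist_eq_diff[OF L(1), of l] lengths by simp
  also have "\<dots> = circ_dist L' (\<pi> (\<iota> 0)) (\<pi> (\<iota> l))"
    using \<pi>_\<iota>[rule_format, of 0] \<pi>_\<iota>[rule_format, of l] lengths by simp
  also have "\<dots> = r * circ_dist L (\<iota> 0) (\<iota> l)"
    using scale arc_ends(5,6) by blast
  also have "circ_dist L (\<iota> 0) (\<iota> l) = L - l"
    unfolding arc_ends circ_dist_rmod[OF L(2)] circ_dist_affine[OF signs(1)] circ_dist_commute[of L 0]
    using circ_dist_eq_diff[OF L(2), of l] lengths by simp
  finally show ?thesis .
qed

lemma step_on_gap:
  assumes \<rho>: "l < \<rho>" "\<rho> < L"
  shows "\<pi> ((a + \<epsilon> * \<rho>) rmod L) = (b + \<epsilon>' * (l + r * (\<rho> - l))) rmod L'"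
proof -
  have L: "0 < L'" "0 < L"
    using lengths by linarith+
  have r: "0 \<le> r"
    using step_ratio lengths by (smt (verit) mult_less_0_iff)
  define x y where "x = (a + \<epsilon> * \<rho>) rmod L" and "y = \<pi> x"
  have x: "x \<in> {0..<L} - \<iota> ` {0<..<l}"
    unfolding x_def using gap_point_in_complement \<rho> by simp
  have \<pi>_ends: "\<pi> (\<iota> l) = (b + \<epsilon>' * l) rmod L'" "\<pi> (\<iota> 0) = b rmod L'"
    using \<pi>_\<iota>[rule_format, of l] \<pi>_\<iota>[rule_format, of 0] arc_ends(3,4) lengths by simp_all
  have "circ_dist L' y (b + \<epsilon>' * l) = circ_dist L' y (\<pi> (\<iota> l))"
    unfolding \<pi>_ends by (rule circ_dist_rcong[OF L(1)]) simp_all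
  also have "\<dots> = r * circ_dist L x (\<iota> l)"
    using scale x arc_ends(6) unfolding y_def by blast
  also have "circ_dist L x (\<iota> l) = circ_dist L \<rho> l"
    unfolding x_def arc_ends circ_dist_rmod[OF L(2)] circ_dist_affine[OF signs(1)] ..
  also have "\<dots> = \<rho> - l"
    using circ_dist_eq_abs[OF L(2), of \<rho> l] \<rho> lengths by simp
  finally have y1: "circ_dist L' y (b + \<epsilon>' * l) = r * (\<rho> - l)" .
  have "circ_dist L' y b = circ_dist L' y (\<pi> (\<iota> 0))"
    unfolding \<pi>_ends by (rule circ_dist_rcong[OF L(1)]) simp_all
  also have "\<dots> = r * circ_dist L x (\<iota> 0)"
    using scale x arc_ends(5) unfolding y_def by blast
  also have "circ_dist L x (\<iota> 0) = circ_dist L \<rho> 0"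
    unfolding x_def arc_ends circ_dist_rmod[OF L(2)] circ_dist_affine[OF signs(1)] ..
  also have "\<dots> = L - \<rho>"
    using circ_dist_eq_diff[OF L(2), of \<rho>] \<rho> lengths by simp
  finally have y0: "circ_dist L' y b = r * (L - \<rho>)" .
  have "0 \<le> r * (\<rho> - l)" "0 \<le> r * (L - \<rho>)"
    using r \<rho> by (simp_all add: zero_le_mult_iff)
  moreover have "r * (\<rho> - l) + r * (L - \<rho>) = L' - l"
    using step_ratio by (simp add: algebra_simps)
  moreover have "L' < 2 * l"
    using lengths by simp
  ultimately have "[y = b + \<epsilon>' * (l + r * (\<rho> - l))] (rmod L')"
    using circ_dist_arc_point[OF L(1) lengths(2) _ signs(2) _ _ _ y1 y0] by blast
  moreover have "y \<in> {0..<L'}"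
    unfolding y_def x_def using \<pi>_range L by (simp add: rmod_nonneg rmod_less)
  ultimately show ?thesis
    using L unfolding x_def y_def rcong_def by simp
qed

lemma step_lift:
  "\<exists>\<psi>. mono_short_lift L L' \<psi> \<and> (\<forall>w. \<pi> ((a + \<epsilon> * w) rmod L) = (b + \<epsilon>' * \<psi> w) rmod L')"
proof -
  have L: "0 < L"
    using lengths by linarith
  have r: "0 \<le> r" "r \<le> 1"
    using step_ratio lengths by (smt (verit) mult_less_0_iff mult_le_cancel_right1)+
  define \<psi> where "\<psi> u = u - (1 - r) * gap_time L l u" for u
  have lift: "mono_short_lift L L' \<psi>"
    unfolding \<psi>_def using L lengths r step_ratio by (intro gap_compression_lift) (auto simp: algebra_simps)
  have "\<pi> ((a + \<epsilon> * \<rho>) rmod L) = (b + \<epsilon>' * \<psi> \<rho>) rmod L'" if \<rho>: "\<rho> \<in> {0..<L}" for \<rho>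
  proof (cases "\<rho> \<le> l")
    case True
    then have "\<psi> \<rho> = \<rho>"
      unfolding \<psi>_def using gap_time_eq[of \<rho> L l] \<rho> by simp
    moreover have "(a + \<epsilon> * \<rho>) rmod L = \<iota> \<rho>" "(b + \<epsilon>' * \<rho>) rmod L' = \<phi> \<rho>"
      using \<iota>_arc \<phi>_arc \<rho> True by auto
    ultimately show ?thesis
      using \<pi>_\<iota> \<rho> True by simp
  next
    case False
    have "gap_time L l \<rho> = \<rho> - l"
      using gap_time_eq[of \<rho> L l] \<rho> False by simp
    then have "\<psi> \<rho> = l + r * (\<rho> - l)"
      unfolding \<psi>_def by (simp only:) (simp add: algebra_simps)
    then show ?thesis
      using step_on_gap[of \<rho>] \<rho> False by simp
  qed
  then show ?thesis
    using rmod_lift_extend[OF L lift signs] lift by blast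
qed

end

lemma tightening_step_lift:
  assumes L': "0 < L'" "L' < L" and l: "0 < l" "L \<le> 2 * l"
    and \<iota>: "unit_speed_path False l L \<iota>" "inj_on \<iota> {0<..<l}"
    and \<phi>: "unit_speed_path False l L' \<phi>" "inj_on \<phi> {0<..<l}"
    and \<pi>_range: "\<forall>x\<in>{0..<L}. \<pi> x \<in> {0..<L'}"
    and \<pi>_\<iota>: "\<forall>t\<in>{0..l}. \<pi> (\<iota> t) = \<phi> t"
    and scale: "\<forall>x\<in>Q. \<forall>y\<in>Q. circ_dist L' (\<pi> x) (\<pi> y) = r * circ_dist L x y"
    and Q: "Q = {0..<L} - \<iota> ` {0<..<l}"
  shows "\<exists>a \<epsilon> b \<epsilon>' \<psi>. \<epsilon> \<in> {-1, 1} \<and> \<epsilon>' \<in> {-1, 1} \<and> mono_short_lift L L' \<psi> \<and>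
           (\<forall>w. \<pi> ((a + \<epsilon> * w) rmod L) = (b + \<epsilon>' * \<psi> w) rmod L')"
proof -
  have L: "0 < L"
    using L' by simp
  obtain \<epsilon> where \<epsilon>: "\<epsilon> \<in> {-1, 1}" "\<forall>t\<in>{0..l}. \<iota> t = (\<iota> 0 + \<epsilon> * t) rmod L"
    using unit_speed_path_affine[OF L l(1) \<iota>] by blast
  obtain \<epsilon>' where \<epsilon>': "\<epsilon>' \<in> {-1, 1}" "\<forall>t\<in>{0..l}. \<phi> t = (\<phi> 0 + \<epsilon>' * t) rmod L'"
    using unit_speed_path_affine[OF L'(1) l(1) \<phi>] by blast
  have "l \<le> L'"
    using affine_path_length_le[OF L'(1) \<epsilon>' \<phi>(2)] .
  moreover have "\<forall>x\<in>{0..<L} - \<iota> ` {0<..<l}. \<forall>y\<in>{0..<L} - \<iota> ` {0<..<l}.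
      circ_dist L' (\<pi> x) (\<pi> y) = r * circ_dist L x y"
    using scale unfolding Q .
  ultimately obtain \<psi> where "mono_short_lift L L' \<psi>"
    "\<forall>w. \<pi> ((\<iota> 0 + \<epsilon> * w) rmod L) = (\<phi> 0 + \<epsilon>' * \<psi> w) rmod L'"
    using step_lift[OF l(1) _ L'(2) l(2) \<epsilon>(1) \<epsilon>'(1) \<epsilon>(2) \<epsilon>'(2) \<pi>_range \<pi>_\<iota>] by blast
  then show ?thesis
    using \<epsilon>(1) \<epsilon>'(1) by blast
qed

lemma rmod_shift_image:
  assumes L: "0 < L" and b: "0 \<le> b" "b < L" and l: "0 < l" "l < L"
  shows "(\<lambda>s. (b + s) rmod L) ` {0<..<l} = {b<..<min (b + l) L} \<union> {0..<b + l - L}"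
proof
  show "(\<lambda>s. (b + s) rmod L) ` {0<..<l} \<subseteq> {b<..<min (b + l) L} \<union> {0..<b + l - L}"
  proof
    fix x assume "x \<in> (\<lambda>s. (b + s) rmod L) ` {0<..<l}"
    then obtain s where s: "s \<in> {0<..<l}" "x = (b + s) rmod L"
      by blast
    show "x \<in> {b<..<min (b + l) L} \<union> {0..<b + l - L}"
    proof (cases "b + s < L")
      case True
      then have "x = b + s"
        using s b L by simp
      then show ?thesis
        using s True by auto
    next
      case False
      have "(b + s) rmod L = b + s - L"
        by (rule rmod_unique[of _ _ _ 1]) (use s b l L False in auto)
      then have "x = b + s - L"
        using s by simp
      then show ?thesis
        using s False b by auto
    qed
  qed
  show "{b<..<min (b + l) L} \<union> {0..<b + l - L} \<subseteq> (\<lambda>s. (b + s) rmod L) ` {0<..<l}"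
  proof
    fix x assume "x \<in> {b<..<min (b + l) L} \<union> {0..<b + l - L}"
    then consider "x \<in> {b<..<min (b + l) L}" | "x \<in> {0..<b + l - L}"
      by blast
    then show "x \<in> (\<lambda>s. (b + s) rmod L) ` {0<..<l}"
    proof cases
      case 1
      then have "x = (b + (x - b)) rmod L" "x - b \<in> {0<..<l}"
        using b by auto
      then show ?thesis
        by blast
    next
      case 2
      have "(b + (x + L - b)) rmod L = x"
        by (rule rmod_unique[of _ _ _ 1]) (use 2 b l L in auto)
      moreover have "x + L - b \<in> {0<..<l}"
        using 2 b by auto
      ultimately show ?thesis
        by (metis image_eqI)
    qed
  qed
qed

lemma affine_arc_complement_measure:
  assumes L: "0 < L" and l: "0 < l" "l < L" and \<epsilon>: "\<epsilon> \<in> {-1, 1}"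
    and \<iota>: "\<forall>t\<in>{0<..<l}. \<iota> t = (a + \<epsilon> * t) rmod L"
  shows "L - l \<le> measure lborel ({0..<L} - \<iota> ` {0<..<l})"
proof -
  define b where "b = (if \<epsilon> = 1 then a else a - l) rmod L"
  have b: "0 \<le> b" "b < L"
    unfolding b_def using L by (simp_all add: rmod_nonneg rmod_less)
  have \<iota>b: "\<iota> t = (b + (if \<epsilon> = 1 then t else l - t)) rmod L" if "t \<in> {0<..<l}" for t
  proof -
    have "[b + (if \<epsilon> = 1 then t else l - t)
        = (if \<epsilon> = 1 then a else a - l) + (if \<epsilon> = 1 then t else l - t)] (rmod L)"
      unfolding b_def by (rule rcong_add) simp_all
    moreover have "(if \<epsilon> = 1 then a else a - l) + (if \<epsilon> = 1 then t else l - t) = a + \<epsilon> * t"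
      using \<epsilon> by auto
    ultimately show ?thesis
      using \<iota> that unfolding rcong_def by simp
  qed
  have "\<iota> ` {0<..<l} = (\<lambda>s. (b + s) rmod L) ` {0<..<l}"
  proof (cases "\<epsilon> = 1")
    case True
    then show ?thesis
      using \<iota>b by simp
  next
    case False
    have "(\<lambda>t. l - t) ` {0<..<l} = {0<..<l}"
      by (auto simp: image_iff intro!: bexI[of _ "l - x" for x])
    then have "(\<lambda>s. (b + s) rmod L) ` {0<..<l} = (\<lambda>s. (b + s) rmod L) ` (\<lambda>t. l - t) ` {0<..<l}"
      by simp
    also have "\<dots> = (\<lambda>t. (b + (l - t)) rmod L) ` {0<..<l}"
      by (simp add: image_image)
    finally have "(\<lambda>s. (b + s) rmod L) ` {0<..<l} = (\<lambda>t. (b + (l - t)) rmod L) ` {0<..<l}" .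
    then show ?thesis
      using \<iota>b False by simp
  qed
  also have "\<dots> = {b<..<min (b + l) L} \<union> {0..<b + l - L}"
    by (rule rmod_shift_image[OF L b l])
  finally have image: "\<iota> ` {0<..<l} = {b<..<min (b + l) L} \<union> {0..<b + l - L}" .
  have "measure lborel ({b<..<min (b + l) L} \<union> {0..<b + l - L})
      \<le> measure lborel {b<..<min (b + l) L} + measure lborel {0..<b + l - L}"
    by (rule measure_Un_le) auto
  also have "\<dots> = l"
    using b l by (auto simp: min_def)
  finally have "measure lborel (\<iota> ` {0<..<l}) \<le> l"
    unfolding image .
  moreover have "measure lborel ({0..<L} - \<iota> ` {0<..<l}) = L - measure lborel (\<iota> ` {0<..<l})"
    unfolding image using L b l by (subst measure_Diff) auto
  ultimately show ?thesis
    by simp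
qed

section \<open>Tightening sequences\<close>

locale tightening =
  fixes L :: "nat \<Rightarrow> real" and caseA pc :: "nat \<Rightarrow> bool" and l :: "nat \<Rightarrow> real"
    and \<iota> \<phi> \<pi> :: "nat \<Rightarrow> real \<Rightarrow> real"
  assumes tightening_seq: "tightening_seq L caseA pc l \<iota> \<phi> \<pi>"

begin

lemma length_pos: "0 < L i"
  using tightening_seq unfolding tightening_seq_def by blast

lemma pi_maps_into: "x \<in> {0..<L i} \<Longrightarrow> \<pi> i x \<in> {0..<L (Suc i)}"
  using tightening_seq unfolding tightening_seq_def circ_pts_def by blast

lemma pi_iota: "t \<in> pdom (pc i) (l i) \<Longrightarrow> \<pi> i (\<iota> i t) = \<phi> i t"
  using tightening_seq unfolding tightening_seq_def by blast

lemma identity_step: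
  assumes "\<not> caseA i"
  shows "pc i \<and> l i = L i \<and> L (Suc i) = L i \<and> (\<forall>x\<in>{0..<L i}. \<iota> i x = x \<and> \<phi> i x = x \<and> \<pi> i x = x)"
proof -
  have step: "pc i \<and> l i = L i \<and> L (Suc i) = L i \<and> (\<forall>t\<in>circ_pts (L i). \<iota> i t = t \<and> \<phi> i t = t)"
    using tightening_seq assms unfolding tightening_seq_def by blast
  then have "pdom (pc i) (l i) = {0..<L i}"
    unfolding pdom_def by simp
  then have "\<forall>x\<in>{0..<L i}. \<pi> i (\<iota> i x) = \<phi> i x"
    using pi_iota by blast
  with step show ?thesis
    unfolding circ_pts_def by auto
qed

lemma shortening_step:
  assumes "caseA i"
  shows "unit_speed_path (pc i) (l i) (L i) (\<iota> i)" "unit_speed_path (pc i) (l i) (L (Suc i)) (\<phi> i)"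
    "inj_on (\<iota> i) (pint (pc i) (l i))" "inj_on (\<phi> i) (pint (pc i) (l i))"
    "L 0 / 2 \<le> l i" "L (Suc i) < L i"
    "\<pi> i ` Qset True (L i) (pc i) (l i) (\<iota> i) = Qset True (L (Suc i)) (pc i) (l i) (\<phi> i)"
    "\<forall>x\<in>Qset True (L i) (pc i) (l i) (\<iota> i). \<forall>y\<in>Qset True (L i) (pc i) (l i) (\<iota> i).
        circ_dist (L (Suc i)) (\<pi> i x) (\<pi> i y) =
        measure lborel (Qset True (L (Suc i)) (pc i) (l i) (\<phi> i)) /
        measure lborel (Qset True (L i) (pc i) (l i) (\<iota> i)) * circ_dist (L i) x y"
  using tightening_seq assms unfolding tightening_seq_def Let_def by blast+

lemma length_Suc_le: "L (Suc i) \<le> L i"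
  using identity_step[of i] shortening_step(6)[of i] by (cases "caseA i") auto

lemma length_le_first: "L i \<le> L 0"
  by (induction i) (use length_Suc_le order_trans in blast)+

lemma picomp_in:
  assumes "x \<in> {0..<L 0}" shows "picomp \<pi> i x \<in> {0..<L i}"
proof (induction i)
  case (Suc i)
  then show ?case
    using pi_maps_into[OF Suc.IH] by simp
qed (use assms in simp)

lemma shortening_step_interval:
  assumes "caseA i" shows "\<not> pc i"
proof
  assume "pc i"
  have "0 < l i"
    using shortening_step(5)[OF assms] length_pos[of 0] by simp
  moreover have "unit_speed_path True (l i) (L i) (\<iota> i)" "inj_on (\<iota> i) {0..<l i}"
    "unit_speed_path True (l i) (L (Suc i)) (\<phi> i)" "inj_on (\<phi> i) {0..<l i}"
    using shortening_step(1-4)[OF assms] \<open>pc i\<close> unfolding pint_def by simp_all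
  ultimately have "l i = L i" "l i = L (Suc i)"
    using unit_speed_circle_path_length[OF length_pos] by blast+
  then show False
    using shortening_step(6)[OF assms] by simp
qed

lemma shortening_step_data:
  assumes "caseA i"
  shows "unit_speed_path False (l i) (L i) (\<iota> i)" "inj_on (\<iota> i) {0<..<l i}"
    "unit_speed_path False (l i) (L (Suc i)) (\<phi> i)" "inj_on (\<phi> i) {0<..<l i}"
    "0 < l i" "L i \<le> 2 * l i"
    "\<forall>t\<in>{0..l i}. \<pi> i (\<iota> i t) = \<phi> i t"
    "Qset (caseA i) (L i) (pc i) (l i) (\<iota> i) = {0..<L i} - \<iota> i ` {0<..<l i}"
proof -
  note data = shortening_step[OF assms] and interval = shortening_step_interval[OF assms]
  show "unit_speed_path False (l i) (L i) (\<iota> i)" "inj_on (\<iota> i) {0<..<l i}"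
    "unit_speed_path False (l i) (L (Suc i)) (\<phi> i)" "inj_on (\<phi> i) {0<..<l i}"
    using data(1-4) interval unfolding pint_def by simp_all
  show "0 < l i" "L i \<le> 2 * l i"
    using data(5) length_pos[of 0] length_le_first[of i] by simp_all
  show "\<forall>t\<in>{0..l i}. \<pi> i (\<iota> i t) = \<phi> i t"
    using pi_iota interval unfolding pdom_def by simp
  show "Qset (caseA i) (L i) (pc i) (l i) (\<iota> i) = {0..<L i} - \<iota> i ` {0<..<l i}"
    using assms interval unfolding Qset_def circ_pts_def pint_def by simp
qed

lemma pi_lift:
  assumes "s \<in> {-1, 1}"
  shows "\<exists>\<psi> c' s'. s' \<in> {-1, 1} \<and> mono_short_lift (L i) (L (Suc i)) \<psi> \<and>
           (\<forall>u. \<pi> i ((c + s * u) rmod L i) = (c' + s' * \<psi> u) rmod L (Suc i))"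
proof (cases "caseA i")
  case False
  have "mono_short_lift (L i) (L (Suc i)) (\<lambda>u. u)"
    using identity_step[OF False] unfolding mono_short_lift_def mono_short_on_def by simp
  moreover have "\<pi> i ((c + s * u) rmod L i) = (c + s * u) rmod L (Suc i)" for u
    using identity_step[OF False] length_pos[of i] by (simp add: rmod_nonneg rmod_less)
  ultimately show ?thesis
    using assms by (intro exI[of _ "\<lambda>u. u"] exI[of _ c] exI[of _ s]) simp
next
  case True
  note data = shortening_step_data[OF True]
  have Q: "Qset True (L i) (pc i) (l i) (\<iota> i) = {0..<L i} - \<iota> i ` {0<..<l i}"
    using data(8) True by simp
  have "\<forall>x\<in>{0..<L i}. \<pi> i x \<in> {0..<L (Suc i)}"
    using pi_maps_into by blast
  then obtain a \<epsilon> b \<epsilon>' \<psi> where "\<epsilon> \<in> {-1, 1}" "\<epsilon>' \<in> {-1, 1}" "mono_short_lift (L i) (L (Suc i)) \<psi>"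
      "\<forall>w. \<pi> i ((a + \<epsilon> * w) rmod L i) = (b + \<epsilon>' * \<psi> w) rmod L (Suc i)"
    using tightening_step_lift[OF length_pos shortening_step(6)[OF True] data(5,6,1,2,3,4) _ data(7)
        shortening_step(8)[OF True] Q] by blast
  then obtain \<psi>' s' where "s' \<in> {-1, 1}" "mono_short_lift (L i) (L (Suc i)) \<psi>'"
      "\<forall>u. \<pi> i ((c + s * u) rmod L i) = (b + s' * \<psi>' u) rmod L (Suc i)"
    using mono_short_lift_rebase[OF _ _ _ assms] by metis
  then show ?thesis
    by blast
qed

lemma Qlen_ge: "L i - L (Suc i) \<le> Qlen L caseA pc l \<iota> i"
proof (cases "caseA i")
  case False
  then show ?thesis
    using identity_step[OF False] unfolding Qlen_def Qset_def by simp
next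
  case True
  note data = shortening_step_data[OF True]
  obtain \<epsilon> where \<epsilon>: "\<epsilon> \<in> {-1, 1}" "\<forall>t\<in>{0..l i}. \<iota> i t = (\<iota> i 0 + \<epsilon> * t) rmod L i"
    using unit_speed_path_affine[OF length_pos data(5,1,2)] by blast
  obtain \<epsilon>' where \<epsilon>': "\<epsilon>' \<in> {-1, 1}" "\<forall>t\<in>{0..l i}. \<phi> i t = (\<phi> i 0 + \<epsilon>' * t) rmod L (Suc i)"
    using unit_speed_path_affine[OF length_pos data(5,3,4)] by blast
  have "l i \<le> L (Suc i)"
    using affine_path_length_le[OF length_pos \<epsilon>' data(4)] .
  then have "l i < L i"
    using shortening_step(6)[OF True] by simp
  have "\<forall>t\<in>{0<..<l i}. \<iota> i t = (\<iota> i 0 + \<epsilon> * t) rmod L i"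
  proof
    fix t assume "t \<in> {0<..<l i}"
    then have "t \<in> {0..l i}"
      by simp
    then show "\<iota> i t = (\<iota> i 0 + \<epsilon> * t) rmod L i"
      using \<epsilon>(2) by blast
  qed
  then have "L i - l i \<le> measure lborel ({0..<L i} - \<iota> i ` {0<..<l i})"
    by (rule affine_arc_complement_measure[OF length_pos data(5) \<open>l i < L i\<close> \<epsilon>(1)])
  then show ?thesis
    using data(8) \<open>l i \<le> L (Suc i)\<close> unfolding Qlen_def by simp
qed

lemma length_limit_pos:
  assumes "summable (Qlen L caseA pc l \<iota>)" "(\<Sum>i. Qlen L caseA pc l \<iota> i) < L 0" "L \<longlonglongrightarrow> Linf"
  shows "0 < Linf"
proof -
  have "L 0 - (\<Sum>k<i. Qlen L caseA pc l \<iota> k) \<le> L i" for i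
  proof (induction i)
    case (Suc i)
    then show ?case
      using Qlen_ge[of i] by simp
  qed simp
  moreover have "0 \<le> Qlen L caseA pc l \<iota> k" for k
    unfolding Qlen_def by simp
  then have "(\<Sum>k<i. Qlen L caseA pc l \<iota> k) \<le> (\<Sum>k. Qlen L caseA pc l \<iota> k)" for i
    using sum_le_suminf[OF assms(1), of "{..<i}"] by simp
  ultimately have "L 0 - (\<Sum>k. Qlen L caseA pc l \<iota> k) \<le> L i" for i
    by (meson diff_left_mono order_trans)
  then have "L 0 - (\<Sum>k. Qlen L caseA pc l \<iota> k) \<le> Linf"
    using LIMSEQ_le_const[OF assms(3)] by blast
  then show ?thesis
    using assms(2) by simp
qed

definition picomp_lift :: "nat \<Rightarrow> (real \<Rightarrow> real) \<Rightarrow> real \<Rightarrow> real \<Rightarrow> bool" where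
  "picomp_lift i G c s \<longleftrightarrow> G 0 = 0 \<and> G (L 0) = L i \<and> mono_short_on {0..L 0} G \<and> s \<in> {-1, 1} \<and>
     (\<forall>x\<in>{0..<L 0}. picomp \<pi> i x = (c + s * G x) rmod L i)"

lemma picomp_lift_0: "picomp_lift 0 (\<lambda>x. x) 0 1"
  unfolding picomp_lift_def mono_short_on_def using length_pos[of 0] by simp

lemma picomp_lift_Suc:
  assumes "picomp_lift i G c s"
  shows "\<exists>G' c' s'. picomp_lift (Suc i) G' c' s' \<and> (\<forall>x\<in>{0..L 0}. G' x \<le> G x)"
proof -
  have G: "G 0 = 0" "G (L 0) = L i" "mono_short_on {0..L 0} G" "s \<in> {-1, 1}"
    and picomp: "\<forall>x\<in>{0..<L 0}. picomp \<pi> i x = (c + s * G x) rmod L i"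
    using assms unfolding picomp_lift_def by auto
  obtain \<psi> c' s' where s': "s' \<in> {-1, 1}" and \<psi>: "mono_short_lift (L i) (L (Suc i)) \<psi>"
    and lift: "\<forall>u. \<pi> i ((c + s * u) rmod L i) = (c' + s' * \<psi> u) rmod L (Suc i)"
    using pi_lift[OF G(4)] by blast
  define G' where "G' x = \<psi> (G x) - \<psi> 0" for x
  have "G' (L 0) = L (Suc i)"
    using mono_short_liftD(2)[OF \<psi>, of 0] unfolding G'_def G(2) by simp
  moreover have "G' x \<le> G' y \<and> G' y - G' x \<le> y - x" if "x \<in> {0..L 0}" "y \<in> {0..L 0}" "x \<le> y" for x y
    using G(3) mono_short_liftD(1)[OF \<psi>, of "G x" "G y"] that
    unfolding mono_short_on_def G'_def by force
  moreover have "picomp \<pi> (Suc i) x = (c' + s' * \<psi> 0 + s' * G' x) rmod L (Suc i)" if "x \<in> {0..<L 0}" for x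
  proof -
    have "picomp \<pi> (Suc i) x = \<pi> i ((c + s * G x) rmod L i)"
      using picomp that by simp
    also have "\<dots> = (c' + s' * \<psi> (G x)) rmod L (Suc i)"
      using lift by blast
    also have "c' + s' * \<psi> (G x) = c' + s' * \<psi> 0 + s' * G' x"
      unfolding G'_def by (simp add: algebra_simps)
    finally show ?thesis .
  qed
  moreover have "G' x \<le> G x" if "x \<in> {0..L 0}" for x
    using G(1,3) mono_short_liftD(1)[OF \<psi>, of 0 "G x"] that
    unfolding mono_short_on_def G'_def by force
  ultimately have "picomp_lift (Suc i) G' (c' + s' * \<psi> 0) s' \<and> (\<forall>x\<in>{0..L 0}. G' x \<le> G x)"
    using s' unfolding picomp_lift_def mono_short_on_def G'_def G(1) by simp
  then show ?thesis
    by blast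
qed

lemma picomp_lifts:
  obtains G c s where "\<And>i. picomp_lift i (G i) (c i) (s i)"
    and "\<And>i x. x \<in> {0..L 0} \<Longrightarrow> G (Suc i) x \<le> G i x"
proof -
  have "\<exists>f. \<forall>i. (\<lambda>(G, c, s). picomp_lift i G c s) (f i) \<and>
      (\<lambda>(G, _) (G', _). \<forall>x\<in>{0..L 0}. G' x \<le> G x) (f i) (f (Suc i))"
  proof (rule dependent_nat_choice)
    show "\<exists>p. (\<lambda>(G, c, s). picomp_lift 0 G c s) p"
      using picomp_lift_0 by blast
    show "\<exists>q. (\<lambda>(G, c, s). picomp_lift (Suc i) G c s) q \<and> (\<lambda>(G, _) (G', _). \<forall>x\<in>{0..L 0}. G' x \<le> G x) p q"
      if "(\<lambda>(G, c, s). picomp_lift i G c s) p" for p i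
      using picomp_lift_Suc that by (cases p) fastforce
  qed
  then obtain f where "\<forall>i. (\<lambda>(G, c, s). picomp_lift i G c s) (f i) \<and>
      (\<lambda>(G, _) (G', _). \<forall>x\<in>{0..L 0}. G' x \<le> G x) (f i) (f (Suc i))"
    by blast
  then show ?thesis
    by (intro that[of "\<lambda>i. fst (f i)" "\<lambda>i. fst (snd (f i))" "\<lambda>i. snd (snd (f i))"])
      (simp_all add: case_prod_beta)
qed

lemma picomp_lift_limit:
  assumes lifts: "\<And>i. picomp_lift i (G i) (c i) (s i)"
    and dec: "\<And>i x. x \<in> {0..L 0} \<Longrightarrow> G (Suc i) x \<le> G i x"
  obtains Gl where "\<And>x. x \<in> {0..L 0} \<Longrightarrow> (\<lambda>i. G i x) \<longlonglongrightarrow> Gl x"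
    and "mono_short_on {0..L 0} Gl" "Gl 0 = 0" "L \<longlonglongrightarrow> Gl (L 0)"
proof -
  have G: "G i 0 = 0" "G i (L 0) = L i" "mono_short_on {0..L 0} (G i)" for i
    using lifts[of i] unfolding picomp_lift_def by simp_all
  define Gl where "Gl x = lim (\<lambda>i. G i x)" for x
  have lim: "(\<lambda>i. G i x) \<longlonglongrightarrow> Gl x" if x: "x \<in> {0..L 0}" for x
  proof -
    have "decseq (\<lambda>i. G i x)"
      using dec[OF x] by (rule decseq_SucI)
    moreover have "\<forall>i. 0 \<le> G i x"
      using mono_short_onD[OF G(3) _ x, of 0] G(1) x by simp
    ultimately obtain g where "(\<lambda>i. G i x) \<longlonglongrightarrow> g"
      by (rule decseq_convergent)
    moreover from this have "Gl x = g"
      unfolding Gl_def by (rule limI)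
    ultimately show ?thesis
      by simp
  qed
  have "Gl x \<le> Gl y \<and> Gl y - Gl x \<le> y - x" if xy: "x \<in> {0..L 0}" "y \<in> {0..L 0}" "x \<le> y" for x y
  proof -
    have "G i x \<le> G i y" "G i y - G i x \<le> y - x" for i
      using mono_short_onD[OF G(3) xy] by auto
    then show ?thesis
      using LIMSEQ_le[OF lim[OF xy(1)] lim[OF xy(2)]]
        LIMSEQ_le[OF tendsto_diff[OF lim[OF xy(2)] lim[OF xy(1)]] tendsto_const[of "y - x"]] by simp
  qed
  then have "mono_short_on {0..L 0} Gl"
    unfolding mono_short_on_def by blast
  moreover have "Gl 0 = 0"
    unfolding Gl_def G(1) by simp
  moreover have "L \<longlonglongrightarrow> Gl (L 0)"
    using lim[of "L 0"] length_pos[of 0] unfolding G(2) by simp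
  ultimately show ?thesis
    using that lim by blast
qed

lemma picomp_dist_tendsto:
  assumes lifts: "\<And>i. picomp_lift i (G i) (c i) (s i)"
    and Gl: "\<And>x. x \<in> {0..L 0} \<Longrightarrow> (\<lambda>i. G i x) \<longlonglongrightarrow> Gl x" "L \<longlonglongrightarrow> Gl (L 0)" "0 < Gl (L 0)"
    and xy: "x \<in> {0..<L 0}" "y \<in> {0..<L 0}"
  shows "(\<lambda>i. circ_dist (L i) (picomp \<pi> i x) (picomp \<pi> i y)) \<longlonglongrightarrow> circ_dist (Gl (L 0)) (Gl x) (Gl y)"
proof -
  have "circ_dist (L i) (picomp \<pi> i x) (picomp \<pi> i y) = circ_dist (L i) (G i x) (G i y)" for i
  proof -
    have "s i \<in> {-1, 1}" "\<forall>x\<in>{0..<L 0}. picomp \<pi> i x = (c i + s i * G i x) rmod L i"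
      using lifts[of i] unfolding picomp_lift_def by auto
    then have "circ_dist (L i) (picomp \<pi> i x) (picomp \<pi> i y)
        = circ_dist (L i) (c i + s i * G i x) (c i + s i * G i y)"
      using xy circ_dist_rmod[OF length_pos] by simp
    also have "\<dots> = circ_dist (L i) (G i x) (G i y)"
      by (rule circ_dist_affine) fact
    finally show ?thesis .
  qed
  moreover have "(\<lambda>i. circ_dist (L i) (G i x) (G i y)) \<longlonglongrightarrow> circ_dist (Gl (L 0)) (Gl x) (Gl y)"
    using xy by (intro circ_dist_tendsto Gl length_pos) auto
  ultimately show ?thesis
    by simp
qed

lemma value_step_outside_Q:
  assumes \<alpha>s: "\<And>i t. t \<in> pdom (pc i) (l i) \<Longrightarrow> \<alpha>s i (\<iota> i t) = \<alpha>s (Suc i) (\<phi> i t)"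
    and z: "z \<in> {0..<L i}" "z \<notin> Qset (caseA i) (L i) (pc i) (l i) (\<iota> i)"
  shows "\<alpha>s (Suc i) (\<pi> i z) = \<alpha>s i z"
proof (cases "caseA i")
  case False
  then have "\<iota> i z = z" "\<phi> i z = z" "\<pi> i z = z" "z \<in> pdom (pc i) (l i)"
    using identity_step[OF False] z unfolding pdom_def by auto
  then show ?thesis
    using \<alpha>s[of z i] by simp
next
  case True
  then obtain t where t: "t \<in> pint (pc i) (l i)" "z = \<iota> i t"
    using z unfolding Qset_def circ_pts_def by auto
  then have "t \<in> pdom (pc i) (l i)"
    unfolding pint_def pdom_def by (auto split: if_splits)
  then show ?thesis
    using \<alpha>s pi_iota t by simp
qed

lemma pi_Q_outside_P0:
  assumes z: "z \<in> Qset (caseA i) (L i) (pc i) (l i) (\<iota> i)"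
  shows "\<pi> i z \<notin> P0 L pc l \<iota> \<pi> (Suc i)"
proof
  assume "\<pi> i z \<in> P0 L pc l \<iota> \<pi> (Suc i)"
  then obtain t where t: "t \<in> pint (pc i) (l i)" "\<pi> i z = \<pi> i (\<iota> i t)"
    by auto
  have "caseA i"
    using z unfolding Qset_def by (cases "caseA i") auto
  then have "\<pi> i z \<in> Qset True (L (Suc i)) (pc i) (l i) (\<phi> i)"
    using shortening_step(7)[of i] z by auto
  moreover have "\<pi> i z = \<phi> i t"
    using t pi_iota[of t i] unfolding pint_def pdom_def by (auto split: if_splits)
  ultimately show False
    using t(1) unfolding Qset_def by auto
qed

lemma pi_outside_P0:
  assumes disjoint: "completely_disjoint L caseA pc l \<iota> \<pi>"
    and z: "z \<in> {0..<L i}" "z \<notin> P0 L pc l \<iota> \<pi> i"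
  shows "\<pi> i z \<notin> P0 L pc l \<iota> \<pi> (Suc i)"
proof
  assume "\<pi> i z \<in> P0 L pc l \<iota> \<pi> (Suc i)"
  then have "\<pi> i z \<in> \<pi> i ` (P0 L pc l \<iota> \<pi> i \<inter> \<iota> i ` pint (pc i) (l i))"
    by simp
  then obtain t where t: "t \<in> pint (pc i) (l i)" "\<iota> i t \<in> P0 L pc l \<iota> \<pi> i" "\<pi> i z = \<pi> i (\<iota> i t)"
    by blast
  have "z = \<iota> i t"
  proof (cases "caseA i")
    case False
    note id = identity_step[OF False]
    then have "t \<in> {0..<L i}"
      using t(1) unfolding pint_def by simp
    then show ?thesis
      using id z(1) t(3) by simp
  next
    case True
    have "z \<notin> Qset (caseA i) (L i) (pc i) (l i) (\<iota> i)"
      using disjoint z(2) unfolding completely_disjoint_def by blast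
    then have "z \<in> \<iota> i ` pint (pc i) (l i)"
      using z(1) True unfolding Qset_def circ_pts_def by simp
    then obtain t' where t': "t' \<in> pint (pc i) (l i)" "z = \<iota> i t'"
      by blast
    have "pint (pc i) (l i) \<subseteq> pdom (pc i) (l i)"
      unfolding pint_def pdom_def by auto
    then have "\<phi> i t' = \<phi> i t"
      using pi_iota t(1,3) t' by (metis subsetD)
    then have "t' = t"
      using inj_onD[OF shortening_step(4)[OF True] _ t'(1) t(1)] by blast
    then show ?thesis
      using t' by simp
  qed
  then show False
    using t(2) z(2) by simp
qed

lemma values_eventually_const:
  assumes \<alpha>s: "\<And>i t. t \<in> pdom (pc i) (l i) \<Longrightarrow> \<alpha>s i (\<iota> i t) = \<alpha>s (Suc i) (\<phi> i t)"
    and disjoint: "completely_disjoint L caseA pc l \<iota> \<pi>" and x: "x \<in> {0..<L 0}"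
  shows "\<exists>N. \<forall>i\<ge>N. \<alpha>s i (picomp \<pi> i x) = \<alpha>s N (picomp \<pi> N x)"
proof -
  define z where "z i = picomp \<pi> i x" for i
  have z: "z i \<in> {0..<L i}" "z (Suc i) = \<pi> i (z i)" for i
    unfolding z_def using picomp_in[OF x] by simp_all
  have step: "\<alpha>s (Suc i) (z (Suc i)) = \<alpha>s i (z i)"
    if "z i \<notin> Qset (caseA i) (L i) (pc i) (l i) (\<iota> i)" for i
    using value_step_outside_Q[OF \<alpha>s z(1) that] z(2) by simp
  show ?thesis
  proof (cases "\<exists>i. z i \<in> Qset (caseA i) (L i) (pc i) (l i) (\<iota> i)")
    case False
    then have "\<alpha>s i (z i) = \<alpha>s 0 (z 0)" for i
      by (induction i) (simp_all add: step)
    then show ?thesis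
      unfolding z_def by blast
  next
    case True
    then obtain N where N: "z N \<in> Qset (caseA N) (L N) (pc N) (l N) (\<iota> N)"
      by blast
    have outside: "z (Suc N + d) \<notin> P0 L pc l \<iota> \<pi> (Suc N + d)" for d
    proof (induction d)
      case 0
      then show ?case
        using pi_Q_outside_P0[OF N] z(2)[of N] by (simp del: P0.simps)
    next
      case (Suc d)
      then show ?case
        using pi_outside_P0[OF disjoint z(1) Suc.IH] z(2)[of "Suc N + d"] by (simp del: P0.simps)
    qed
    have "\<alpha>s (Suc N + d) (z (Suc N + d)) = \<alpha>s (Suc N) (z (Suc N))" for d
    proof (induction d)
      case (Suc d)
      have "z (Suc N + d) \<notin> Qset (caseA (Suc N + d)) (L (Suc N + d)) (pc (Suc N + d)) (l (Suc N + d)) (\<iota> (Suc N + d))"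
        using outside[of d] disjoint unfolding completely_disjoint_def by blast
      then show ?case
        using step Suc.IH by simp
    qed simp
    then have "\<forall>i\<ge>Suc N. \<alpha>s i (z i) = \<alpha>s (Suc N) (z (Suc N))"
      by (metis le_add_diff_inverse)
    then show ?thesis
      unfolding z_def by blast
  qed
qed

end

section \<open>The limit circle\<close>

lemma rcircle_of_limit:
  assumes Linf: "0 < Linf" and h: "bij_betw h S (circ_pts Linf)"
    and V: "\<And>c. c \<in> S \<Longrightarrow> (\<lambda>i. f i c) \<longlonglongrightarrow> V c"
    and d: "\<And>c c'. c \<in> S \<Longrightarrow> c' \<in> S \<Longrightarrow> (\<lambda>i. d i c c') \<longlonglongrightarrow> circ_dist Linf (h c) (h c')"
    and le: "\<And>i c c'. c \<in> S \<Longrightarrow> c' \<in> S \<Longrightarrow> dist (f i c) (f i c') \<le> d i c c' + R"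
  shows "rcircle R Linf (V \<circ> inv_into S h)"
proof -
  have V_dist: "dist (V c) (V c') \<le> circ_dist Linf (h c) (h c') + R" if "c \<in> S" "c' \<in> S" for c c'
    using LIMSEQ_le[OF tendsto_dist[OF V V] tendsto_add[OF d tendsto_const]] le that by blast
  have "inv_into S h p \<in> S" "h (inv_into S h p) = p" if "p \<in> circ_pts Linf" for p
    using h that by (auto simp: bij_betw_def inv_into_into f_inv_into_f)
  then show ?thesis
    unfolding rcircle_def using Linf V_dist by fastforce
qed

lemma Sinf_section_in:
  assumes "\<forall>c\<in>Sinf L \<pi>. \<sigma> c \<in> c" and "c \<in> Sinf L \<pi>"
  shows "\<sigma> c \<in> {0..<L 0}"
proof -
  have "c \<subseteq> circ_pts (L 0)"
    using assms(2) unfolding Sinf_def by blast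
  then show ?thesis
    using assms unfolding circ_pts_def by blast
qed

context tightening

begin

lemma values_convergent:
  assumes "\<And>i t. t \<in> pdom (pc i) (l i) \<Longrightarrow> \<alpha>s i (\<iota> i t) = \<alpha>s (Suc i) (\<phi> i t)"
    and "completely_disjoint L caseA pc l \<iota> \<pi>" and "x \<in> {0..<L 0}"
  shows "convergent (\<lambda>i. \<alpha>s i (picomp \<pi> i x))"
proof -
  obtain N where "\<forall>i\<ge>N. \<alpha>s i (picomp \<pi> i x) = \<alpha>s N (picomp \<pi> N x)"
    using values_eventually_const[OF assms] by blast
  then have "eventually (\<lambda>i. \<alpha>s i (picomp \<pi> i x) = \<alpha>s N (picomp \<pi> N x)) sequentially"
    unfolding eventually_sequentially by blast
  then have "(\<lambda>i. \<alpha>s i (picomp \<pi> i x)) \<longlonglongrightarrow> \<alpha>s N (picomp \<pi> N x)"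
    by (rule tendsto_eventually)
  then show ?thesis
    by (rule convergentI)
qed

lemma limit_circle:
  assumes "summable (Qlen L caseA pc l \<iota>)" "(\<Sum>i. Qlen L caseA pc l \<iota> i) < L 0"
  obtains Linf g where "0 < Linf" "continuous_on {0..L 0} g" "g 0 = 0" "g (L 0) = Linf"
    "\<And>x y. x \<in> {0..<L 0} \<Longrightarrow> y \<in> {0..<L 0} \<Longrightarrow>
       (\<lambda>i. circ_dist (L i) (picomp \<pi> i x) (picomp \<pi> i y)) \<longlonglongrightarrow> circ_dist Linf (g x) (g y)"
proof -
  obtain G c s where lifts: "\<And>i. picomp_lift i (G i) (c i) (s i)"
    and dec: "\<And>i x. x \<in> {0..L 0} \<Longrightarrow> G (Suc i) x \<le> G i x"
    using picomp_lifts by blast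
  obtain Gl where lim: "\<And>x. x \<in> {0..L 0} \<Longrightarrow> (\<lambda>i. G i x) \<longlonglongrightarrow> Gl x"
    and Gl: "mono_short_on {0..L 0} Gl" "Gl 0 = 0" "L \<longlonglongrightarrow> Gl (L 0)"
    using picomp_lift_limit[OF lifts dec] by blast
  have "0 < Gl (L 0)"
    using length_limit_pos[OF assms Gl(3)] .
  then show ?thesis
    using that mono_short_on_continuous_on[OF Gl(1)] Gl(2) picomp_dist_tendsto[OF lifts lim Gl(3)]
    by blast
qed

lemma Sinf_circle:
  assumes Linf: "0 < Linf" and g: "continuous_on {0..L 0} g" "g 0 = 0" "g (L 0) = Linf"
    and \<delta>: "\<And>x y. x \<in> {0..<L 0} \<Longrightarrow> y \<in> {0..<L 0} \<Longrightarrow> tdelta L \<pi> x y = circ_dist Linf (g x) (g y)"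
    and \<sigma>: "\<forall>c\<in>Sinf L \<pi>. \<sigma> c \<in> c"
  shows "bij_betw (\<lambda>c. g (\<sigma> c) rmod Linf) (Sinf L \<pi>) (circ_pts Linf)"
proof -
  define cls where "cls x = {y\<in>circ_pts (L 0). tdelta L \<pi> x y = 0}" for x
  have Sinf: "Sinf L \<pi> = cls ` {0..<L 0}"
    unfolding Sinf_def cls_def circ_pts_def ..
  have zero: "tdelta L \<pi> x y = 0 \<longleftrightarrow> [g x = g y] (rmod Linf)" if "x \<in> {0..<L 0}" "y \<in> {0..<L 0}" for x y
    using \<delta>[OF that] circ_dist_eq_0_iff[OF Linf] by simp
  have cls_eq: "cls x = cls y" if xy: "x \<in> {0..<L 0}" "y \<in> {0..<L 0}" "[g x = g y] (rmod Linf)" for x y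
  proof -
    have "tdelta L \<pi> x z = 0 \<longleftrightarrow> tdelta L \<pi> y z = 0" if "z \<in> {0..<L 0}" for z
      using zero[OF xy(1) that] zero[OF xy(2) that] xy(3) by (meson rcong_sym rcong_trans)
    then show ?thesis
      unfolding cls_def circ_pts_def by auto
  qed
  have \<sigma>_rcong: "\<sigma> (cls x) \<in> {0..<L 0} \<and> [g x = g (\<sigma> (cls x))] (rmod Linf)" if x: "x \<in> {0..<L 0}" for x
  proof -
    have "cls x \<in> Sinf L \<pi>"
      unfolding Sinf using x by (rule imageI)
    then have "\<sigma> (cls x) \<in> cls x"
      using \<sigma> by blast
    then have "\<sigma> (cls x) \<in> {0..<L 0}" "tdelta L \<pi> x (\<sigma> (cls x)) = 0"
      unfolding cls_def circ_pts_def by auto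
    then show ?thesis
      using zero[OF x] by blast
  qed
  have \<sigma>_cls: "\<sigma> c \<in> {0..<L 0} \<and> c = cls (\<sigma> c)" if "c \<in> Sinf L \<pi>" for c
  proof -
    from that have "c \<in> cls ` {0..<L 0}"
      unfolding Sinf .
    then obtain x where x: "x \<in> {0..<L 0}" "c = cls x"
      by blast
    have "\<sigma> (cls x) \<in> {0..<L 0}" "[g x = g (\<sigma> (cls x))] (rmod Linf)"
      using \<sigma>_rcong[OF x(1)] by blast+
    then have "\<sigma> (cls x) \<in> {0..<L 0}" "cls x = cls (\<sigma> (cls x))"
      using cls_eq[OF x(1)] by blast+
    then show ?thesis
      unfolding x(2) by (rule conjI)
  qed
  have "inj_on (\<lambda>c. g (\<sigma> c) rmod Linf) (Sinf L \<pi>)"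
  proof (rule inj_onI)
    fix c c' assume c: "c \<in> Sinf L \<pi>" "c' \<in> Sinf L \<pi>"
      and eq: "g (\<sigma> c) rmod Linf = g (\<sigma> c') rmod Linf"
    from eq have "[g (\<sigma> c) = g (\<sigma> c')] (rmod Linf)"
      unfolding rcong_def .
    moreover have "\<sigma> c \<in> {0..<L 0}" "\<sigma> c' \<in> {0..<L 0}" "c = cls (\<sigma> c)" "c' = cls (\<sigma> c')"
      using \<sigma>_cls[OF c(1)] \<sigma>_cls[OF c(2)] by blast+
    ultimately show "c = c'"
      using cls_eq by metis
  qed
  moreover have "(\<lambda>c. g (\<sigma> c) rmod Linf) ` Sinf L \<pi> = circ_pts Linf"
  proof
    show "(\<lambda>c. g (\<sigma> c) rmod Linf) ` Sinf L \<pi> \<subseteq> circ_pts Linf"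
      using Linf unfolding circ_pts_def by (auto simp: rmod_nonneg rmod_less)
    show "circ_pts Linf \<subseteq> (\<lambda>c. g (\<sigma> c) rmod Linf) ` Sinf L \<pi>"
    proof
      fix p assume p: "p \<in> circ_pts Linf"
      have "\<exists>x. 0 \<le> x \<and> x \<le> L 0 \<and> g x = p"
        by (rule IVT'[OF _ _ _ g(1)]) (use g(2,3) p length_pos[of 0] in \<open>auto simp: circ_pts_def\<close>)
      then obtain x where x: "0 \<le> x" "x \<le> L 0" "g x = p"
        by blast
      then have "x \<in> {0..<L 0}"
        using p g(3) unfolding circ_pts_def by (cases "x = L 0") auto
      then have "[g (\<sigma> (cls x)) = p] (rmod Linf)"
        using \<sigma>_rcong x(3) rcong_sym by blast
      then have "g (\<sigma> (cls x)) rmod Linf = p"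
        using p Linf unfolding rcong_def circ_pts_def by simp
      moreover have "cls x \<in> Sinf L \<pi>"
        unfolding Sinf using \<open>x \<in> {0..<L 0}\<close> by (rule imageI)
      ultimately show "p \<in> (\<lambda>c. g (\<sigma> c) rmod Linf) ` Sinf L \<pi>"
        by (metis rev_image_eqI)
    qed
  qed
  ultimately show ?thesis
    by (rule bij_betw_imageI)
qed

lemma limit_rcircle:
  assumes rc: "\<And>i. rcircle R (L i) (\<alpha>s i)" and Linf: "0 < Linf" and h: "bij_betw h S (circ_pts Linf)"
    and \<sigma>: "\<And>c. c \<in> S \<Longrightarrow> \<sigma> c \<in> {0..<L 0}"
    and conv: "\<And>c. c \<in> S \<Longrightarrow> convergent (\<lambda>i. \<alpha>s i (picomp \<pi> i (\<sigma> c)))"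
    and dist: "\<And>c c'. c \<in> S \<Longrightarrow> c' \<in> S \<Longrightarrow>
      (\<lambda>i. circ_dist (L i) (picomp \<pi> i (\<sigma> c)) (picomp \<pi> i (\<sigma> c'))) \<longlonglongrightarrow> circ_dist Linf (h c) (h c')"
  shows "rcircle R Linf ((\<lambda>c. lim (\<lambda>i. \<alpha>s i (picomp \<pi> i (\<sigma> c)))) \<circ> inv_into S h)"
proof (rule rcircle_of_limit[where f = "\<lambda>i c. \<alpha>s i (picomp \<pi> i (\<sigma> c))"
      and d = "\<lambda>i c c'. circ_dist (L i) (picomp \<pi> i (\<sigma> c)) (picomp \<pi> i (\<sigma> c'))", OF Linf h _ dist])
  show "(\<lambda>i. \<alpha>s i (picomp \<pi> i (\<sigma> c))) \<longlonglongrightarrow> lim (\<lambda>i. \<alpha>s i (picomp \<pi> i (\<sigma> c)))" if "c \<in> S" for c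
    using conv[OF that] by (rule convergent_LIMSEQ_iff[THEN iffD1])
  show "dist (\<alpha>s i (picomp \<pi> i (\<sigma> c))) (\<alpha>s i (picomp \<pi> i (\<sigma> c'))) \<le>
      circ_dist (L i) (picomp \<pi> i (\<sigma> c)) (picomp \<pi> i (\<sigma> c')) + R"
    if "c \<in> S" "c' \<in> S" for i c c'
    using rc[of i] picomp_in[OF \<sigma>[OF that(1)]] picomp_in[OF \<sigma>[OF that(2)]]
    unfolding rcircle_def circ_pts_def by blast
qed

end

theorem lemma4p3:
  fixes R :: real and \<alpha> :: "real \<Rightarrow> 'a::metric_space"
    and L :: "nat \<Rightarrow> real" and caseA pc :: "nat \<Rightarrow> bool" and l :: "nat \<Rightarrow> real"
    and \<iota> \<phi> \<pi> :: "nat \<Rightarrow> real \<Rightarrow> real" and \<alpha>s :: "nat \<Rightarrow> real \<Rightarrow> 'a"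
    and \<sigma> :: "real set \<Rightarrow> real"
  assumes "0 \<le> R"
    and "rough_geodesic R (UNIV :: 'a set)"
    and "rcircle R (L 0) \<alpha>"
    and "tightening_seq_for R \<alpha> L caseA pc l \<iota> \<phi> \<pi> \<alpha>s"
    and "completely_disjoint L caseA pc l \<iota> \<pi>"
    and "summable (Qlen L caseA pc l \<iota>)" and "(\<Sum>i. Qlen L caseA pc l \<iota> i) < L 0"
    and "\<forall>c\<in>Sinf L \<pi>. \<sigma> c \<in> c"
  shows "(\<forall>c\<in>Sinf L \<pi>. convergent (\<lambda>i. \<alpha>s i (picomp \<pi> i (\<sigma> c)))) \<and>
         (\<exists>Linf h. bij_betw h (Sinf L \<pi>) (circ_pts Linf) \<and>
            (\<forall>c\<in>Sinf L \<pi>. \<forall>c'\<in>Sinf L \<pi>.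
                circ_dist Linf (h c) (h c') = tdelta L \<pi> (\<sigma> c) (\<sigma> c')) \<and>
            rcircle R Linf
              ((\<lambda>c. lim (\<lambda>i. \<alpha>s i (picomp \<pi> i (\<sigma> c)))) \<circ> inv_into (Sinf L \<pi>) h))"
proof -
  have ts: "tightening_seq L caseA pc l \<iota> \<phi> \<pi>"
    and \<alpha>s: "\<And>i t. t \<in> pdom (pc i) (l i) \<Longrightarrow> \<alpha>s i (\<iota> i t) = \<alpha>s (Suc i) (\<phi> i t)"
    and rc: "\<And>i. rcircle R (L i) (\<alpha>s i)"
    using assms(4) unfolding tightening_seq_for_def by blast+
  interpret tightening L caseA pc l \<iota> \<phi> \<pi>
    by (rule tightening.intro) (fact ts)
  have \<sigma>: "\<And>c. c \<in> Sinf L \<pi> \<Longrightarrow> \<sigma> c \<in> {0..<L 0}"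
    using Sinf_section_in[OF assms(8)] .
  have conv: "\<And>c. c \<in> Sinf L \<pi> \<Longrightarrow> convergent (\<lambda>i. \<alpha>s i (picomp \<pi> i (\<sigma> c)))"
    using values_convergent[OF \<alpha>s assms(5) \<sigma>] .
  obtain Linf g where Linf: "0 < Linf" and g: "continuous_on {0..L 0} g" "g 0 = 0" "g (L 0) = Linf"
    and dist_lim: "\<And>x y. x \<in> {0..<L 0} \<Longrightarrow> y \<in> {0..<L 0} \<Longrightarrow>
       (\<lambda>i. circ_dist (L i) (picomp \<pi> i x) (picomp \<pi> i y)) \<longlonglongrightarrow> circ_dist Linf (g x) (g y)"
    using limit_circle[OF assms(6,7)] by blast
  have \<delta>: "tdelta L \<pi> x y = circ_dist Linf (g x) (g y)" if "x \<in> {0..<L 0}" "y \<in> {0..<L 0}" for x y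
    unfolding tdelta_def using dist_lim[OF that] by (rule limI)
  define h where "h c = g (\<sigma> c) rmod Linf" for c
  have h_dist: "circ_dist Linf (h c) (h c') = circ_dist Linf (g (\<sigma> c)) (g (\<sigma> c'))" for c c'
    unfolding h_def by (rule circ_dist_rmod[OF Linf])
  have bij: "bij_betw h (Sinf L \<pi>) (circ_pts Linf)"
    unfolding h_def by (rule Sinf_circle[OF Linf g \<delta> assms(8)])
  have h_lim: "(\<lambda>i. circ_dist (L i) (picomp \<pi> i (\<sigma> c)) (picomp \<pi> i (\<sigma> c'))) \<longlonglongrightarrow> circ_dist Linf (h c) (h c')"
    if "c \<in> Sinf L \<pi>" "c' \<in> Sinf L \<pi>" for c c'
    unfolding h_dist using dist_lim[OF \<sigma>[OF that(1)] \<sigma>[OF that(2)]] .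
  have "rcircle R Linf ((\<lambda>c. lim (\<lambda>i. \<alpha>s i (picomp \<pi> i (\<sigma> c)))) \<circ> inv_into (Sinf L \<pi>) h)"
    by (rule limit_rcircle[where \<sigma> = \<sigma>, OF rc Linf bij \<sigma> conv h_lim])
  moreover have "circ_dist Linf (h c) (h c') = tdelta L \<pi> (\<sigma> c) (\<sigma> c')"
    if "c \<in> Sinf L \<pi>" "c' \<in> Sinf L \<pi>" for c c'
    unfolding h_dist using \<delta>[OF \<sigma>[OF that(1)] \<sigma>[OF that(2)]] by simp
  ultimately show ?thesis
    using conv bij by blast
qed

end
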